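(* Let $(H,A,C)$ be a Doi-Hopf datum. Make $D=C^{\mathrm{cop}}\otimes C$ a right $H$-module coalgebra via $(c\otimes d)\cdot h=c\otimes d\cdot h$, and consider Koppinen's algebra $\#(D,A)$. Then $V_3\subseteq\#(D,A)$ is closed under the multiplication $\bullet$, and for $\theta,\theta'\in V_3$, $$(\theta\bullet\theta')(c\otimes d)=\sum\theta(c_{(3)}\otimes d)\,\theta'(c_{(1)}\otimes c_{(2)}).$$ Every normalized element of $V_3$ is a right unit of $V_3$ (i.e. $\theta'\bullet\theta=\theta'$ for all $\theta'\in V_3$), and in particular is idempotent.
   Context: Sweedler notation $\Delta(c)=\sum c_{(1)}\otimes c_{(2)}$, $\rho(m)=\sum m_{<-1>}\otimes m_{<0>}$. Doi-Hopf datum $(H,A,C)$: $H$ bialgebra, $A$ left $H$-comodule algebra, $C$ right $H$-module coalgebra, $C$ flat over the commutative ring $k$. For a right $H$-module coalgebra $D$, Koppinen's smash product $\#(D,A)$ is $\mathrm{Hom}(D,A)$ with product $(f\bullet g)(x)=\sum f(x_{(1)})_{<0>}\,g\big(x_{(2)}\cdot f(x_{(1)})_{<-1>}\big)$ and unit $x\mapsto\varepsilon(x)1_A$; in $C^{\mathrm{cop}}\otimes C$, $\Delta(c\otimes d)=\sum(c_{(2)}\otimes d_{(1)})\otimes(c_{(1)}\otimes d_{(2)})$. $V_3$ is the set of $k$-linear $\theta:C\otimes C\to A$ such that for all $a\in A$, $c,d\in C$: $\theta(c\otimes d)a=\sum a_{<0>}\theta(c\cdot a_{<-2>}\otimes d\cdot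 a_{<-1>})$ and $\sum c_{(1)}\otimes\theta(c_{(2)}\otimes d)=\sum d_{(2)}\cdot\theta(c\otimes d_{(1)})_{<-1>}\otimes\theta(c\otimes d_{(1)})_{<0>}$. $\theta$ is normalized if $\sum\theta(c_{(1)}\otimes c_{(2)})=\varepsilon(c)1_A$. *)

theory Defs
  imports Complex_Main
begin

text \<open>An element of the tensor
product is represented by a finite list of pairs (its formal sum with coefficient 1 each;
signs/scalars are absorbed into the first factor).
Carrier sets allow submodules (needed for the flatness criterion).\<close>

definition delta :: "'x \<Rightarrow> 'x \<Rightarrow> int" where
  "delta q = (\<lambda>p. if p = q then 1 else 0)"

inductive_set tker2 :: "'a set \<Rightarrow> ('k::comm_ring_1 \<Rightarrow> 'a::ab_group_add \<Rightarrow> 'a)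
    \<Rightarrow> 'b set \<Rightarrow> ('k \<Rightarrow> 'b::ab_group_add \<Rightarrow> 'b) \<Rightarrow> ('a \<times> 'b \<Rightarrow> int) set"
  for SA sa SB sb where
  zero: "(\<lambda>_. 0) \<in> tker2 SA sa SB sb"
| add: "x \<in> tker2 SA sa SB sb \<Longrightarrow> y \<in> tker2 SA sa SB sb \<Longrightarrow> (\<lambda>p. x p + y p) \<in> tker2 SA sa SB sb"
| neg: "x \<in> tker2 SA sa SB sb \<Longrightarrow> (\<lambda>p. - x p) \<in> tker2 SA sa SB sb"
| addl: "a \<in> SA \<Longrightarrow> a' \<in> SA \<Longrightarrow> b \<in> SB \<Longrightarrow>
     (\<lambda>p. delta (a + a', b) p - delta (a, b) p - delta (a', b) p) \<in> tker2 SA sa SB sb"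
| addr: "a \<in> SA \<Longrightarrow> b \<in> SB \<Longrightarrow> b' \<in> SB \<Longrightarrow>
     (\<lambda>p. delta (a, b + b') p - delta (a, b) p - delta (a, b') p) \<in> tker2 SA sa SB sb"
| scal: "a \<in> SA \<Longrightarrow> b \<in> SB \<Longrightarrow>
     (\<lambda>p. delta (sa r a, b) p - delta (a, sb r b) p) \<in> tker2 SA sa SB sb"

definition tensor2_eq :: "'a set \<Rightarrow> ('k::comm_ring_1 \<Rightarrow> 'a::ab_group_add \<Rightarrow> 'a)
    \<Rightarrow> 'b set \<Rightarrow> ('k \<Rightarrow> 'b::ab_group_add \<Rightarrow> 'b) \<Rightarrow> ('a \<times> 'b) list \<Rightarrow> ('a \<times> 'b) list \<Rightarrow> bool" where
  "tensor2_eq SA sa SB sb xs ys \<longleftrightarrow> set xs \<subseteq> SA \<times> SB \<and> set ys \<subseteq> SA \<times> SB \<and>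
     (\<lambda>p. int (count_list xs p) - int (count_list ys p)) \<in> tker2 SA sa SB sb"

abbreviation teq2 where "teq2 sa sb \<equiv> tensor2_eq UNIV sa UNIV sb"

inductive_set tker3 :: "('k::comm_ring_1 \<Rightarrow> 'a::ab_group_add \<Rightarrow> 'a)
    \<Rightarrow> ('k \<Rightarrow> 'b::ab_group_add \<Rightarrow> 'b) \<Rightarrow> ('k \<Rightarrow> 'c::ab_group_add \<Rightarrow> 'c)
    \<Rightarrow> ('a \<times> 'b \<times> 'c \<Rightarrow> int) set"
  for sa sb sc where
  zero: "(\<lambda>_. 0) \<in> tker3 sa sb sc"
| add: "x \<in> tker3 sa sb sc \<Longrightarrow> y \<in> tker3 sa sb sc \<Longrightarrow> (\<lambda>p. x p + y p) \<in> tker3 sa sb sc"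
| neg: "x \<in> tker3 sa sb sc \<Longrightarrow> (\<lambda>p. - x p) \<in> tker3 sa sb sc"
| add1: "(\<lambda>p. delta (a + a', b, c) p - delta (a, b, c) p - delta (a', b, c) p) \<in> tker3 sa sb sc"
| add2: "(\<lambda>p. delta (a, b + b', c) p - delta (a, b, c) p - delta (a, b', c) p) \<in> tker3 sa sb sc"
| add3: "(\<lambda>p. delta (a, b, c + c') p - delta (a, b, c) p - delta (a, b, c') p) \<in> tker3 sa sb sc"
| scal12: "(\<lambda>p. delta (sa r a, b, c) p - delta (a, sb r b, c) p) \<in> tker3 sa sb sc"
| scal23: "(\<lambda>p. delta (a, sb r b, c) p - delta (a, b, sc r c) p) \<in> tker3 sa sb sc"

definition teq3 :: "('k::comm_ring_1 \<Rightarrow> 'a::ab_group_add \<Rightarrow> 'a)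
    \<Rightarrow> ('k \<Rightarrow> 'b::ab_group_add \<Rightarrow> 'b) \<Rightarrow> ('k \<Rightarrow> 'c::ab_group_add \<Rightarrow> 'c)
    \<Rightarrow> ('a \<times> 'b \<times> 'c) list \<Rightarrow> ('a \<times> 'b \<times> 'c) list \<Rightarrow> bool" where
  "teq3 sa sb sc xs ys \<longleftrightarrow> (\<lambda>p. int (count_list xs p) - int (count_list ys p)) \<in> tker3 sa sb sc"

definition k_algebra :: "('k::comm_ring_1 \<Rightarrow> 'r::ring_1 \<Rightarrow> 'r) \<Rightarrow> bool" where
  "k_algebra s \<longleftrightarrow> module s \<and> (\<forall>r x y. s r (x * y) = s r x * y \<and> s r (x * y) = x * s r y)"

definition lin_to_tensor :: "('k::comm_ring_1 \<Rightarrow> 'm::ab_group_add \<Rightarrow> 'm)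
   \<Rightarrow> ('k \<Rightarrow> 'a::ab_group_add \<Rightarrow> 'a) \<Rightarrow> ('k \<Rightarrow> 'b::ab_group_add \<Rightarrow> 'b)
   \<Rightarrow> ('m \<Rightarrow> ('a \<times> 'b) list) \<Rightarrow> bool" where
  "lin_to_tensor sm sa sb D \<longleftrightarrow>
     (\<forall>x y. teq2 sa sb (D (x + y)) (D x @ D y)) \<and>
     (\<forall>r x. teq2 sa sb (D (sm r x)) (map (\<lambda>(u, v). (sa r u, v)) (D x)))"

definition k_linear :: "('k::comm_ring_1 \<Rightarrow> 'm::ab_group_add \<Rightarrow> 'm)
   \<Rightarrow> ('k \<Rightarrow> 'n::ab_group_add \<Rightarrow> 'n) \<Rightarrow> ('m \<Rightarrow> 'n) \<Rightarrow> bool" where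
  "k_linear sm sn f \<longleftrightarrow> (\<forall>x y. f (x + y) = f x + f y) \<and> (\<forall>r x. f (sm r x) = sn r (f x))"

definition k_coalgebra :: "('k::comm_ring_1 \<Rightarrow> 'c::ab_group_add \<Rightarrow> 'c)
   \<Rightarrow> ('c \<Rightarrow> ('c \<times> 'c) list) \<Rightarrow> ('c \<Rightarrow> 'k) \<Rightarrow> bool" where
  "k_coalgebra s D e \<longleftrightarrow> module s \<and> lin_to_tensor s s s D \<and> k_linear s (*) e \<and>
     (\<forall>c. teq3 s s s [(x1, x2, y). (x, y) \<leftarrow> D c, (x1, x2) \<leftarrow> D x]
                     [(x, y1, y2). (x, y) \<leftarrow> D c, (y1, y2) \<leftarrow> D y]) \<and>
     (\<forall>c. sum_list (map (\<lambda>(x, y). s (e x) y) (D c)) = c) \<and>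
     (\<forall>c. sum_list (map (\<lambda>(x, y). s (e y) x) (D c)) = c)"

definition bialgebra :: "('k::comm_ring_1 \<Rightarrow> 'h::ring_1 \<Rightarrow> 'h)
   \<Rightarrow> ('h \<Rightarrow> ('h \<times> 'h) list) \<Rightarrow> ('h \<Rightarrow> 'k) \<Rightarrow> bool" where
  "bialgebra s D e \<longleftrightarrow> k_algebra s \<and> k_coalgebra s D e \<and>
     (\<forall>x y. teq2 s s (D (x * y)) [(x1 * y1, x2 * y2). (x1, x2) \<leftarrow> D x, (y1, y2) \<leftarrow> D y]) \<and>
     teq2 s s (D 1) [(1, 1)] \<and>
     (\<forall>x y. e (x * y) = e x * e y) \<and> e 1 = 1"

text \<open>Left H-comodule algebra A with coaction \<rho>(m) = \<Sum> m_{-1} \<otimes> m_0.\<close>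
definition left_comodule_algebra :: "('k::comm_ring_1 \<Rightarrow> 'h::ring_1 \<Rightarrow> 'h)
   \<Rightarrow> ('h \<Rightarrow> ('h \<times> 'h) list) \<Rightarrow> ('h \<Rightarrow> 'k)
   \<Rightarrow> ('k \<Rightarrow> 'a::ring_1 \<Rightarrow> 'a) \<Rightarrow> ('a \<Rightarrow> ('h \<times> 'a) list) \<Rightarrow> bool" where
  "left_comodule_algebra sH DH eH sA rho \<longleftrightarrow> k_algebra sA \<and> lin_to_tensor sA sH sA rho \<and>
     (\<forall>m. teq3 sH sH sA [(h1, h2, a). (h, a) \<leftarrow> rho m, (h1, h2) \<leftarrow> DH h]
                        [(h, h', a'). (h, a) \<leftarrow> rho m, (h', a') \<leftarrow> rho a]) \<and>
     (\<forall>m. sum_list (map (\<lambda>(h, a). sA (eH h) a) (rho m)) = m) \<and>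
     (\<forall>a b. teq2 sH sA (rho (a * b)) [(h * h', a' * b'). (h, a') \<leftarrow> rho a, (h', b') \<leftarrow> rho b]) \<and>
     teq2 sH sA (rho 1) [(1, 1)]"

definition right_module_coalgebra :: "('k::comm_ring_1 \<Rightarrow> 'h::ring_1 \<Rightarrow> 'h)
   \<Rightarrow> ('h \<Rightarrow> ('h \<times> 'h) list) \<Rightarrow> ('h \<Rightarrow> 'k)
   \<Rightarrow> ('k \<Rightarrow> 'c::ab_group_add \<Rightarrow> 'c) \<Rightarrow> ('c \<Rightarrow> ('c \<times> 'c) list) \<Rightarrow> ('c \<Rightarrow> 'k)
   \<Rightarrow> ('c \<Rightarrow> 'h \<Rightarrow> 'c) \<Rightarrow> bool" where
  "right_module_coalgebra sH DH eH sC DC eC act \<longleftrightarrow> k_coalgebra sC DC eC \<and>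
     (\<forall>c c' h. act (c + c') h = act c h + act c' h) \<and>
     (\<forall>c h h'. act c (h + h') = act c h + act c h') \<and>
     (\<forall>r c h. act (sC r c) h = sC r (act c h) \<and> act c (sH r h) = sC r (act c h)) \<and>
     (\<forall>c g h. act c (g * h) = act (act c g) h) \<and> (\<forall>c. act c 1 = c) \<and>
     (\<forall>c h. teq2 sC sC (DC (act c h)) [(act x h1, act y h2). (x, y) \<leftarrow> DC c, (h1, h2) \<leftarrow> DH h]) \<and>
     (\<forall>c h. eC (act c h) = eC c * eH h)"

definition is_ideal :: "'k::comm_ring_1 set \<Rightarrow> bool" where
  "is_ideal I \<longleftrightarrow> 0 \<in> I \<and> (\<forall>x\<in>I. \<forall>y\<in>I. x + y \<in> I) \<and> (\<forall>r. \<forall>x\<in>I. r * x \<in> I)"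

text \<open>Flatness of C over k, via the ideal criterion: for every ideal I of k the
multiplication map I \<otimes>_k C \<rightarrow> C is injective.\<close>
definition k_flat :: "('k::comm_ring_1 \<Rightarrow> 'c::ab_group_add \<Rightarrow> 'c) \<Rightarrow> bool" where
  "k_flat sC \<longleftrightarrow> (\<forall>I xs. is_ideal I \<longrightarrow> set xs \<subseteq> I \<times> UNIV \<longrightarrow>
       sum_list (map (\<lambda>(i, c). sC i c) xs) = 0 \<longrightarrow> tensor2_eq I (*) UNIV sC xs [])"

definition doi_hopf_datum where
  "doi_hopf_datum sH DH eH sA rho sC DC eC act \<longleftrightarrow>
     bialgebra sH DH eH \<and> left_comodule_algebra sH DH eH sA rho \<and>
     right_module_coalgebra sH DH eH sC DC eC act \<and> k_flat sC"

text \<open>Elements of #(D,A) = Hom(C^cop \<otimes> C, A) are represented by k-bilinear maps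
C \<times> C \<rightarrow> A (universal property of the tensor product): f c d = f(c \<otimes> d).\<close>
definition k_bilinear :: "('k::comm_ring_1 \<Rightarrow> 'c::ab_group_add \<Rightarrow> 'c)
   \<Rightarrow> ('k \<Rightarrow> 'a::ab_group_add \<Rightarrow> 'a) \<Rightarrow> ('c \<Rightarrow> 'c \<Rightarrow> 'a) \<Rightarrow> bool" where
  "k_bilinear sC sA f \<longleftrightarrow> (\<forall>d. k_linear sC sA (\<lambda>c. f c d)) \<and> (\<forall>c. k_linear sC sA (f c))"

text \<open>In C^cop \<otimes> C: \<Delta>(c \<otimes> d) = \<Sum>(c_2 \<otimes> d_1) \<otimes> (c_1 \<otimes> d_2), and (c \<otimes> d) \<cdot> h = c \<otimes> d \<cdot> h, so
(f \<bullet> g)(c \<otimes> d) = \<Sum> f(c_2 \<otimes> d_1)_0 g(c_1 \<otimes> d_2 \<cdot> f(c_2 \<otimes> d_1)_{-1}).\<close>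
definition kop_prod :: "('c \<Rightarrow> ('c \<times> 'c) list) \<Rightarrow> ('c \<Rightarrow> 'h \<Rightarrow> 'c) \<Rightarrow> ('a::ring_1 \<Rightarrow> ('h \<times> 'a) list)
   \<Rightarrow> ('c \<Rightarrow> 'c \<Rightarrow> 'a) \<Rightarrow> ('c \<Rightarrow> 'c \<Rightarrow> 'a) \<Rightarrow> ('c \<Rightarrow> 'c \<Rightarrow> 'a)" where
  "kop_prod DC act rho f g = (\<lambda>c d. sum_list
     [a0 * g c1 (act d2 hm1). (c1, c2) \<leftarrow> DC c, (d1, d2) \<leftarrow> DC d, (hm1, a0) \<leftarrow> rho (f c2 d1)])"

definition V3 :: "('k::comm_ring_1 \<Rightarrow> 'h::ring_1 \<Rightarrow> 'h)
   \<Rightarrow> ('k \<Rightarrow> 'a::ring_1 \<Rightarrow> 'a) \<Rightarrow> ('a \<Rightarrow> ('h \<times> 'a) list)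
   \<Rightarrow> ('k \<Rightarrow> 'c::ab_group_add \<Rightarrow> 'c) \<Rightarrow> ('c \<Rightarrow> ('c \<times> 'c) list) \<Rightarrow> ('c \<Rightarrow> 'h \<Rightarrow> 'c)
   \<Rightarrow> ('c \<Rightarrow> 'c \<Rightarrow> 'a) set" where
  "V3 sH sA rho sC DC act = {\<theta>. k_bilinear sC sA \<theta> \<and>
     (\<forall>a c d. \<theta> c d * a =
        sum_list [a00 * \<theta> (act c hm2) (act d hm1). (hm2, a0) \<leftarrow> rho a, (hm1, a00) \<leftarrow> rho a0]) \<and>
     (\<forall>c d. teq2 sC sA [(c1, \<theta> c2 d). (c1, c2) \<leftarrow> DC c]
                       [(act d2 hm1, a0). (d1, d2) \<leftarrow> DC d, (hm1, a0) \<leftarrow> rho (\<theta> c d1)])}"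

definition normalized :: "('k::comm_ring_1 \<Rightarrow> 'a::ring_1 \<Rightarrow> 'a) \<Rightarrow> ('c \<Rightarrow> ('c \<times> 'c) list)
   \<Rightarrow> ('c \<Rightarrow> 'k) \<Rightarrow> ('c \<Rightarrow> 'c \<Rightarrow> 'a) \<Rightarrow> bool" where
  "normalized sA DC eC \<theta> \<longleftrightarrow> (\<forall>c. sum_list (map (\<lambda>(x, y). \<theta> x y) (DC c)) = sA (eC c) 1)"

end

theory Submission
  imports Defs "HOL-Library.Function_Algebras" "HOL-Library.Groups_Big_Fun"
begin

(* Tensors are lists of pairs modulo the tensor relations, so the basic tool is the universal
   property: tensor-equal lists have equal images under every balanced map.  Applying the second condition of V_3 for theta inside the Koppinen product and
   then coassociativity of Delta gives (theta * theta')(c (x) d) = SUM theta(c_3 (x) d) theta'(c_1 (x) c_2).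
   For this expression, the first condition of V_3 follows from the first conditions for theta'
   and theta, coassociativity of the coaction and H-linearity of Delta; the second condition
   follows by writing both sides as sums over Delta^3 c in different bracketings and using the
   second conditions for theta and theta'.  If theta is normalized, the inner sum
   SUM theta(c_1 (x) c_2) collapses to the counit, whence theta' * theta = theta'. *)

section \<open>Formal sums and the universal property of tensor products\<close>

definition add_subgroup :: "'m::ab_group_add set \<Rightarrow> bool" where
  "add_subgroup K \<longleftrightarrow> 0 \<in> K \<and> (\<forall>x\<in>K. \<forall>y\<in>K. x - y \<in> K)"

lemma add_subgroup_zero: "add_subgroup K \<Longrightarrow> 0 \<in> K"
  and add_subgroup_diff: "add_subgroup K \<Longrightarrow> x \<in> K \<Longrightarrow> y \<in> K \<Longrightarrow> x - y \<in> K"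
  by (simp_all add: add_subgroup_def)

lemma add_subgroup_uminus: "add_subgroup K \<Longrightarrow> x \<in> K \<Longrightarrow> - x \<in> K"
  using add_subgroup_diff[of K 0 x] by (simp add: add_subgroup_zero)

lemma add_subgroup_add: "add_subgroup K \<Longrightarrow> x \<in> K \<Longrightarrow> y \<in> K \<Longrightarrow> x + y \<in> K"
  using add_subgroup_diff[of K x "- y"] by (simp add: add_subgroup_uminus)

lemma add_subgroup_zero_set: "add_subgroup {0}"
  by (simp add: add_subgroup_def)

lemma tker2_subset:
  assumes K: "add_subgroup K"
    and "\<And>a a' b. a \<in> SA \<Longrightarrow> a' \<in> SA \<Longrightarrow> b \<in> SB \<Longrightarrow>
      (\<lambda>p. delta (a + a', b) p - delta (a, b) p - delta (a', b) p) \<in> K"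
    and "\<And>a b b'. a \<in> SA \<Longrightarrow> b \<in> SB \<Longrightarrow> b' \<in> SB \<Longrightarrow>
      (\<lambda>p. delta (a, b + b') p - delta (a, b) p - delta (a, b') p) \<in> K"
    and "\<And>a b r. a \<in> SA \<Longrightarrow> b \<in> SB \<Longrightarrow> (\<lambda>p. delta (sa r a, b) p - delta (a, sb r b) p) \<in> K"
  shows "tker2 SA sa SB sb \<subseteq> K"
proof
  fix z assume "z \<in> tker2 SA sa SB sb"
  then show "z \<in> K"
  proof induction
    case zero
    show ?case using add_subgroup_zero[OF K] by (simp add: zero_fun_def)
  next
    case (add x y)
    then show ?case using add_subgroup_add[OF K] by (simp add: plus_fun_def)
  next
    case (neg x)
    then show ?case using add_subgroup_uminus[OF K] by (simp add: fun_Compl_def)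
  qed (use assms in auto)
qed

lemma tker3_subset:
  assumes K: "add_subgroup K"
    and "\<And>a a' b c. (\<lambda>p. delta (a + a', b, c) p - delta (a, b, c) p - delta (a', b, c) p) \<in> K"
    and "\<And>a b b' c. (\<lambda>p. delta (a, b + b', c) p - delta (a, b, c) p - delta (a, b', c) p) \<in> K"
    and "\<And>a b c c'. (\<lambda>p. delta (a, b, c + c') p - delta (a, b, c) p - delta (a, b, c') p) \<in> K"
    and "\<And>r a b c. (\<lambda>p. delta (sa r a, b, c) p - delta (a, sb r b, c) p) \<in> K"
    and "\<And>a r b c. (\<lambda>p. delta (a, sb r b, c) p - delta (a, b, sc r c) p) \<in> K"
  shows "tker3 sa sb sc \<subseteq> K"
proof
  fix z assume "z \<in> tker3 sa sb sc"
  then show "z \<in> K"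
  proof induction
    case zero
    show ?case using add_subgroup_zero[OF K] by (simp add: zero_fun_def)
  next
    case (add x y)
    then show ?case using add_subgroup_add[OF K] by (simp add: plus_fun_def)
  next
    case (neg x)
    then show ?case using add_subgroup_uminus[OF K] by (simp add: fun_Compl_def)
  qed (use assms in auto)
qed

definition lin_ext :: "('p \<Rightarrow> 'm::ring_1) \<Rightarrow> ('p \<Rightarrow> int) \<Rightarrow> 'm" where
  "lin_ext g z = (\<Sum>p. of_int (z p) * g p)"

lemma lin_ext_superset:
  assumes "finite S" "{p. z p \<noteq> 0} \<subseteq> S"
  shows "lin_ext g z = (\<Sum>p\<in>S. of_int (z p) * g p)"
  unfolding lin_ext_def using assms by (intro Sum_any.expand_superset) auto

lemma lin_ext_diff:
  assumes "finite {p. x p \<noteq> 0}" "finite {p. y p \<noteq> 0}"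
  shows "lin_ext g (\<lambda>p. x p - y p) = lin_ext g x - lin_ext g y"
proof -
  let ?S = "{p. x p \<noteq> 0} \<union> {p. y p \<noteq> 0}"
  have "finite ?S" using assms by simp
  then show ?thesis
    by (simp add: lin_ext_superset[of ?S] left_diff_distrib sum_subtractf subset_iff)
qed

lemma lin_ext_delta: "lin_ext g (delta q) = g q"
proof -
  have summand: "(\<lambda>p. of_int (delta q p) * g p) = (\<lambda>p. if p = q then g p else 0)"
    by (simp add: delta_def fun_eq_iff)
  show ?thesis unfolding lin_ext_def summand by (rule Sum_any.delta)
qed

lemma finite_support_delta: "finite {p. delta q p \<noteq> 0}"
  by (simp add: delta_def)

lemma finite_support_diff:
  "finite {p. x p \<noteq> 0} \<Longrightarrow> finite {p. y p \<noteq> (0::int)} \<Longrightarrow> finite {p. x p - y p \<noteq> 0}"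
  by (rule finite_subset[of _ "{p. x p \<noteq> 0} \<union> {p. y p \<noteq> 0}"]) auto

lemma sum_count_list_superset:
  fixes g :: "'p \<Rightarrow> 'm::semiring_1"
  assumes "finite S" "set xs \<subseteq> S"
  shows "(\<Sum>p\<in>S. of_nat (count_list xs p) * g p) = sum_list (map g xs)"
  using assms(2)
proof (induction xs)
  case (Cons x xs)
  have "(\<Sum>p\<in>S. of_nat (count_list (x # xs) p) * g p)
      = (\<Sum>p\<in>S. of_nat (count_list xs p) * g p + (if p = x then g p else 0))"
    by (intro sum.cong) (auto simp: algebra_simps)
  also have "\<dots> = sum_list (map g xs) + g x"
    using Cons assms(1) by (simp add: sum.distrib)
  finally show ?case by (simp add: add.commute)
qed simp

definition lin_ext_preimage :: "('p \<Rightarrow> 'm::ring_1) \<Rightarrow> 'm set \<Rightarrow> ('p \<Rightarrow> int) set" where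
  "lin_ext_preimage g K = {z. finite {p. z p \<noteq> 0} \<and> lin_ext g z \<in> K}"

lemma add_subgroup_lin_ext_preimage:
  assumes "add_subgroup K" shows "add_subgroup (lin_ext_preimage g K)"
proof -
  have "0 \<in> lin_ext_preimage g K"
    using add_subgroup_zero[OF assms] by (simp add: lin_ext_preimage_def lin_ext_def)
  moreover have "x - y \<in> lin_ext_preimage g K"
    if "x \<in> lin_ext_preimage g K" "y \<in> lin_ext_preimage g K" for x y
    using that finite_support_diff[of x y] lin_ext_diff[of x y g] add_subgroup_diff[OF assms]
    by (simp add: lin_ext_preimage_def fun_diff_def)
  ultimately show ?thesis by (simp add: add_subgroup_def)
qed

lemma delta_diff_in_lin_ext_preimage:
  assumes "g a - g b \<in> K"
  shows "(\<lambda>p. delta a p - delta b p) \<in> lin_ext_preimage g K"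
  using assms finite_support_diff[OF finite_support_delta finite_support_delta, of a b]
  by (simp add: lin_ext_preimage_def lin_ext_diff finite_support_delta lin_ext_delta)

lemma delta_diff3_in_lin_ext_preimage:
  assumes "g a - g b - g c \<in> K"
  shows "(\<lambda>p. delta a p - delta b p - delta c p) \<in> lin_ext_preimage g K"
proof -
  have fin: "finite {p. delta a p - delta b p \<noteq> 0}"
    by (rule finite_support_diff[OF finite_support_delta finite_support_delta])
  show ?thesis
    using assms lin_ext_diff[OF fin finite_support_delta, of g c]
      finite_support_diff[OF fin finite_support_delta, of c]
    by (simp add: lin_ext_preimage_def lin_ext_diff finite_support_delta lin_ext_delta)
qed

definition formal_sum :: "'p list \<Rightarrow> 'p \<Rightarrow> int" where
  "formal_sum xs = (\<lambda>p. int (count_list xs p))"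

lemma formal_sum_Nil [simp]: "formal_sum [] = 0"
  and formal_sum_append [simp]: "formal_sum (xs @ ys) = formal_sum xs + formal_sum ys"
  and formal_sum_Cons: "formal_sum (x # xs) = delta x + formal_sum xs"
  by (simp_all add: formal_sum_def fun_eq_iff delta_def)

lemma formal_sum_concat: "formal_sum (concat xss) = sum_list (map formal_sum xss)"
  by (induction xss) auto

lemma formal_sum_map: "formal_sum (map f xs) = sum_list (map (\<lambda>x. formal_sum [f x]) xs)"
  by (induction xs) (auto simp: formal_sum_Cons)

lemma finite_support_formal_sum: "finite {p. formal_sum xs p \<noteq> 0}"
  by (rule finite_subset[of _ "set xs"]) (auto simp: formal_sum_def count_list_0_iff)

lemma lin_ext_formal_sum: "lin_ext g (formal_sum xs) = sum_list (map g xs)"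
  by (simp add: formal_sum_def lin_ext_superset[of "set xs"] sum_count_list_superset count_list_0_iff)

lemma lin_ext_formal_sum_diff:
  "lin_ext g (formal_sum xs - formal_sum ys) = sum_list (map g xs) - sum_list (map g ys)"
  unfolding fun_diff_def
  by (simp add: lin_ext_diff finite_support_formal_sum lin_ext_formal_sum)

lemma tensor2_eq_iff_formal_sum:
  "tensor2_eq SA sa SB sb xs ys \<longleftrightarrow> set xs \<subseteq> SA \<times> SB \<and> set ys \<subseteq> SA \<times> SB \<and>
     formal_sum xs - formal_sum ys \<in> tker2 SA sa SB sb"
  by (simp add: tensor2_eq_def formal_sum_def fun_diff_def)

lemma teq3_iff_formal_sum:
  "teq3 sa sb sc xs ys \<longleftrightarrow> formal_sum xs - formal_sum ys \<in> tker3 sa sb sc"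
  by (simp add: teq3_def formal_sum_def fun_diff_def)

text \<open>With \<open>K = {0}\<close> this gives well-defined scalar-valued maps on tensors; with \<open>K\<close> the
  relations of another tensor product, well-defined maps between tensor products.\<close>

lemma tensor2_eq_balanced_map:
  fixes g :: "'a::ab_group_add \<times> 'b::ab_group_add \<Rightarrow> 'm::ring_1"
  assumes eq: "tensor2_eq SA sa SB sb xs ys" and K: "add_subgroup K"
    and "\<And>a a' b. a \<in> SA \<Longrightarrow> a' \<in> SA \<Longrightarrow> b \<in> SB \<Longrightarrow> g (a + a', b) - g (a, b) - g (a', b) \<in> K"
    and "\<And>a b b'. a \<in> SA \<Longrightarrow> b \<in> SB \<Longrightarrow> b' \<in> SB \<Longrightarrow> g (a, b + b') - g (a, b) - g (a, b') \<in> K"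
    and "\<And>a b r. a \<in> SA \<Longrightarrow> b \<in> SB \<Longrightarrow> g (sa r a, b) - g (a, sb r b) \<in> K"
  shows "sum_list (map g xs) - sum_list (map g ys) \<in> K"
proof -
  have "tker2 SA sa SB sb \<subseteq> lin_ext_preimage g K"
    by (rule tker2_subset[OF add_subgroup_lin_ext_preimage[OF K]])
       (auto intro: delta_diff3_in_lin_ext_preimage delta_diff_in_lin_ext_preimage assms(3-5))
  then have "formal_sum xs - formal_sum ys \<in> lin_ext_preimage g K"
    using eq by (auto simp: tensor2_eq_iff_formal_sum)
  then show ?thesis by (simp add: lin_ext_preimage_def lin_ext_formal_sum_diff)
qed

lemma teq3_balanced_map:
  fixes g :: "'a::ab_group_add \<times> 'b::ab_group_add \<times> 'c::ab_group_add \<Rightarrow> 'm::ring_1"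
  assumes eq: "teq3 sa sb sc xs ys" and K: "add_subgroup K"
    and "\<And>a a' b c. g (a + a', b, c) - g (a, b, c) - g (a', b, c) \<in> K"
    and "\<And>a b b' c. g (a, b + b', c) - g (a, b, c) - g (a, b', c) \<in> K"
    and "\<And>a b c c'. g (a, b, c + c') - g (a, b, c) - g (a, b, c') \<in> K"
    and "\<And>r a b c. g (sa r a, b, c) - g (a, sb r b, c) \<in> K"
    and "\<And>a r b c. g (a, sb r b, c) - g (a, b, sc r c) \<in> K"
  shows "sum_list (map g xs) - sum_list (map g ys) \<in> K"
proof -
  have "tker3 sa sb sc \<subseteq> lin_ext_preimage g K"
    by (rule tker3_subset[OF add_subgroup_lin_ext_preimage[OF K]])
       (intro delta_diff3_in_lin_ext_preimage delta_diff_in_lin_ext_preimage assms(3-7))+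
  then have "formal_sum xs - formal_sum ys \<in> lin_ext_preimage g K"
    using eq by (auto simp: teq3_iff_formal_sum)
  then show ?thesis by (simp add: lin_ext_preimage_def lin_ext_formal_sum_diff)
qed

lemma add_subgroup_tker2: "add_subgroup (tker2 SA sa SB sb)"
proof -
  have "x - y \<in> tker2 SA sa SB sb" if "x \<in> tker2 SA sa SB sb" "y \<in> tker2 SA sa SB sb" for x y
    using tker2.add[OF that(1) tker2.neg[OF that(2)]] by (simp add: fun_diff_def)
  then show ?thesis using tker2.zero by (auto simp: add_subgroup_def zero_fun_def)
qed

lemma teq2_iff_formal_sum: "teq2 sa sb xs ys \<longleftrightarrow> formal_sum xs - formal_sum ys \<in> tker2 UNIV sa UNIV sb"
  by (simp add: tensor2_eq_iff_formal_sum)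

lemma teq2_formal_sum_eqI: "formal_sum xs = formal_sum ys \<Longrightarrow> teq2 sa sb xs ys"
  by (simp add: teq2_iff_formal_sum add_subgroup_zero[OF add_subgroup_tker2])

lemma teq2_refl: "teq2 sa sb xs xs"
  by (simp add: teq2_formal_sum_eqI)

lemma teq2_sym: "teq2 sa sb xs ys \<Longrightarrow> teq2 sa sb ys xs"
  using add_subgroup_uminus[OF add_subgroup_tker2] by (fastforce simp: teq2_iff_formal_sum)

lemma teq2_trans [trans]: "teq2 sa sb xs ys \<Longrightarrow> teq2 sa sb ys zs \<Longrightarrow> teq2 sa sb xs zs"
  using add_subgroup_add[OF add_subgroup_tker2] by (fastforce simp: teq2_iff_formal_sum)

lemma teq2_append: "teq2 sa sb xs ys \<Longrightarrow> teq2 sa sb xs' ys' \<Longrightarrow> teq2 sa sb (xs @ xs') (ys @ ys')"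
  using add_subgroup_add[OF add_subgroup_tker2] by (fastforce simp: teq2_iff_formal_sum algebra_simps)

lemma teq2_append_cancel: "teq2 sa sb (xs @ zs) (ys @ zs) \<Longrightarrow> teq2 sa sb xs ys"
  by (simp add: teq2_iff_formal_sum)

lemma teq2_concat_map:
  assumes "\<And>x. x \<in> set xs \<Longrightarrow> teq2 sa sb (f x) (g x)"
  shows "teq2 sa sb (concat (map f xs)) (concat (map g xs))"
  using assms by (induction xs) (auto intro: teq2_append teq2_refl)

lemma teq2_add_left: "teq2 sa sb [(a + a', b)] [(a, b), (a', b)]"
proof -
  have "formal_sum [(a + a', b)] - formal_sum [(a, b), (a', b)] =
      (\<lambda>p. delta (a + a', b) p - delta (a, b) p - delta (a', b) p)"
    by (simp add: formal_sum_Cons fun_eq_iff)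
  then show ?thesis by (simp add: teq2_iff_formal_sum tker2.addl)
qed

lemma teq2_add_right: "teq2 sa sb [(a, b + b')] [(a, b), (a, b')]"
proof -
  have "formal_sum [(a, b + b')] - formal_sum [(a, b), (a, b')] =
      (\<lambda>p. delta (a, b + b') p - delta (a, b) p - delta (a, b') p)"
    by (simp add: formal_sum_Cons fun_eq_iff)
  then show ?thesis by (simp add: teq2_iff_formal_sum tker2.addr)
qed

lemma teq2_scale: "teq2 sa sb [(sa r a, b)] [(a, sb r b)]"
proof -
  have "formal_sum [(sa r a, b)] - formal_sum [(a, sb r b)] =
      (\<lambda>p. delta (sa r a, b) p - delta (a, sb r b) p)"
    by (simp add: formal_sum_Cons fun_eq_iff)
  then show ?thesis by (simp add: teq2_iff_formal_sum tker2.scal)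
qed

lemma teq2_Nil_zero_right: "teq2 sa sb [] [(a, 0)]"
  using teq2_add_right[of sa sb a 0 0]
  by (intro teq2_append_cancel[of _ _ _ _ "[(a, 0)]"]) (auto intro: teq2_sym)

lemma teq2_sum_list_right: "teq2 sa sb [(a, sum_list bs)] (map (\<lambda>b. (a, b)) bs)"
proof (induction bs)
  case Nil
  then show ?case using teq2_Nil_zero_right teq2_sym by fastforce
next
  case (Cons b bs)
  have "teq2 sa sb [(a, b + sum_list bs)] ([(a, b)] @ [(a, sum_list bs)])"
    using teq2_add_right by simp
  also have "teq2 sa sb \<dots> ([(a, b)] @ map (\<lambda>b. (a, b)) bs)"
    by (rule teq2_append[OF teq2_refl Cons])
  finally show ?case by simp
qed

section \<open>Linear maps into tensor products\<close>

abbreviation sw_sum :: "('a \<times> 'b) list \<Rightarrow> ('a \<Rightarrow> 'b \<Rightarrow> 'm::monoid_add) \<Rightarrow> 'm" where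
  "sw_sum xs f \<equiv> sum_list (map (\<lambda>(a, b). f a b) xs)"

abbreviation sw_concat :: "('a \<times> 'b) list \<Rightarrow> ('a \<Rightarrow> 'b \<Rightarrow> 'c list) \<Rightarrow> 'c list" where
  "sw_concat xs g \<equiv> concat (map (\<lambda>(a, b). g a b) xs)"

lemma sum_list_concat: "sum_list (concat xss) = sum_list (map sum_list xss)"
  by (induction xss) auto

lemma sum_list_map_concat: "sum_list (map f (concat xss)) = sum_list (map (\<lambda>xs. sum_list (map f xs)) xss)"
  by (induction xss) auto

lemma concat_map_concat: "concat (map f (concat xss)) = concat (map (\<lambda>xs. concat (map f xs)) xss)"
  by (induction xss) auto

lemma concat_concat: "concat (concat xss) = concat (map concat xss)"
  by (induction xss) auto

lemma sum_list_swap: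
  fixes f :: "'x \<Rightarrow> 'y \<Rightarrow> 'c::comm_monoid_add"
  shows "sum_list (map (\<lambda>x. sum_list (map (f x) ys)) xs) =
    sum_list (map (\<lambda>y. sum_list (map (\<lambda>x. f x y) xs)) ys)"
  by (induction xs) (auto simp: sum_list_addf)

lemma sw_sum_cong: "(\<And>a b. (a, b) \<in> set xs \<Longrightarrow> f a b = g a b) \<Longrightarrow> sw_sum xs f = sw_sum xs g"
  by (rule arg_cong[where f=sum_list], rule map_cong) auto

lemma sw_sum_swap:
  fixes f :: "'a \<Rightarrow> 'b \<Rightarrow> 'c \<Rightarrow> 'd \<Rightarrow> 'm::comm_monoid_add"
  shows "sw_sum xs (\<lambda>a b. sw_sum ys (f a b)) = sw_sum ys (\<lambda>c d. sw_sum xs (\<lambda>a b. f a b c d))"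
  using sum_list_swap[of "\<lambda>p q. f (fst p) (snd p) (fst q) (snd q)" ys xs] by (simp add: split_def)

lemma sum_list_swap_nested2:
  fixes F :: "'i \<Rightarrow> 'x1 \<Rightarrow> 'x2 \<Rightarrow> 'c::comm_monoid_add"
  shows "sum_list (map (\<lambda>i. sum_list (map (\<lambda>p1. sum_list (map (F i p1) (L2 p1))) L1)) I) =
    sum_list (map (\<lambda>p1. sum_list (map (\<lambda>p2. sum_list (map (\<lambda>i. F i p1 p2) I)) (L2 p1))) L1)"
  by (induction I) (auto simp: sum_list_addf)

lemma sw_sum_swap_nested2:
  fixes F :: "'a \<Rightarrow> 'b \<Rightarrow> 'c \<Rightarrow> 'd \<Rightarrow> 'e \<Rightarrow> 'f \<Rightarrow> 'm::comm_monoid_add"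
  shows "sw_sum xs (\<lambda>a b. sw_sum ys (\<lambda>c d. sw_sum (zs c d) (F a b c d))) =
    sw_sum ys (\<lambda>c d. sw_sum (zs c d) (\<lambda>e f. sw_sum xs (\<lambda>a b. F a b c d e f)))"
  by (induction xs) (auto simp: sum_list_addf split_def)

lemma sw_sum_swap_nested4:
  fixes F :: "'a \<Rightarrow> 'b \<Rightarrow> 'c1 \<Rightarrow> 'd1 \<Rightarrow> 'c2 \<Rightarrow> 'd2 \<Rightarrow> 'c3 \<Rightarrow> 'd3 \<Rightarrow> 'c4 \<Rightarrow> 'd4 \<Rightarrow> 'm::comm_monoid_add"
  shows "sw_sum xs (\<lambda>a b. sw_sum ys1 (\<lambda>c1 d1. sw_sum (ys2 c1 d1) (\<lambda>c2 d2. sw_sum (ys3 c2 d2) (\<lambda>c3 d3.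
       sw_sum (ys4 c3 d3) (F a b c1 d1 c2 d2 c3 d3))))) =
    sw_sum ys1 (\<lambda>c1 d1. sw_sum (ys2 c1 d1) (\<lambda>c2 d2. sw_sum (ys3 c2 d2) (\<lambda>c3 d3.
       sw_sum (ys4 c3 d3) (\<lambda>c4 d4. sw_sum xs (\<lambda>a b. F a b c1 d1 c2 d2 c3 d3 c4 d4)))))"
  by (induction xs) (auto simp: sum_list_addf split_def)

lemma teq2_concat_swap:
  "teq2 sa sb (concat (map (\<lambda>x. concat (map (f x) ys)) xs))
     (concat (map (\<lambda>y. concat (map (\<lambda>x. f x y) xs)) ys))"
  by (rule teq2_formal_sum_eqI)
     (simp add: formal_sum_concat o_def sum_list_swap[of "\<lambda>x y. formal_sum (f x y)"])

lemma teq2_sw_concat_cong: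
  "(\<And>a b. (a, b) \<in> set xs \<Longrightarrow> teq2 sa sb (f a b) (g a b)) \<Longrightarrow> teq2 sa sb (sw_concat xs f) (sw_concat xs g)"
  by (rule teq2_concat_map) auto

lemma k_linearD:
  assumes "k_linear sm sn f"
  shows "f (x + y) = f x + f y" "f (sm r x) = sn r (f x)"
  using assms unfolding k_linear_def by auto

lemma k_linear_zero: "k_linear sm sn f \<Longrightarrow> f 0 = 0"
  using k_linearD(1)[of sm sn f 0 0] by simp

lemma k_linear_sum_list: "k_linear sm sn f \<Longrightarrow> f (sum_list xs) = sum_list (map f xs)"
  by (induction xs) (auto simp: k_linear_zero k_linearD)

lemma module_scale_sum_list: "module s \<Longrightarrow> s r (sum_list xs) = sum_list (map (s r) xs)"
  by (induction xs) (auto simp: module.scale_right_distrib module.scale_zero_right)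

lemma k_linear_id: "k_linear s s (\<lambda>x. x)"
  by (simp add: k_linear_def)

lemma k_linear_comp: "k_linear sm sn g \<Longrightarrow> k_linear sx sm f \<Longrightarrow> k_linear sx sn (\<lambda>x. g (f x))"
  unfolding k_linear_def by auto

lemma k_linear_sum:
  assumes "module sn" "\<And>i. i \<in> set xs \<Longrightarrow> k_linear sm sn (f i)"
  shows "k_linear sm sn (\<lambda>x. sum_list (map (\<lambda>i. f i x) xs))"
  using assms(2)
proof (induction xs)
  case Nil
  then show ?case using assms(1) by (simp add: k_linear_def module.scale_zero_right)
next
  case (Cons i xs)
  then have "k_linear sm sn (f i)" "k_linear sm sn (\<lambda>x. sum_list (map (\<lambda>i. f i x) xs))" by auto
  then show ?case using assms(1) by (simp add: k_linear_def module.scale_right_distrib)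
qed

lemma k_linear_sw_sum:
  "module sn \<Longrightarrow> (\<And>a b. (a, b) \<in> set xs \<Longrightarrow> k_linear sm sn (f a b)) \<Longrightarrow>
    k_linear sm sn (\<lambda>x. sw_sum xs (\<lambda>a b. f a b x))"
  by (rule k_linear_sum) (auto split: prod.split)

lemma k_linear_mult_right:
  assumes "k_algebra sA" "k_linear sm sA f"
  shows "k_linear sm sA (\<lambda>x. f x * c)"
  using assms unfolding k_linear_def k_algebra_def by (auto simp: distrib_right)

lemma k_linear_mult_left:
  assumes "k_algebra sA" "k_linear sm sA f"
  shows "k_linear sm sA (\<lambda>x. c * f x)"
proof -
  have "sA r (x * y) = x * sA r y" for r x y using assms(1) unfolding k_algebra_def by blast
  then show ?thesis using assms(2) unfolding k_linear_def by (auto simp: distrib_left)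
qed

lemma lin_to_tensorD:
  assumes "lin_to_tensor sm sa sb D"
  shows "teq2 sa sb (D (x + y)) (D x @ D y)" "teq2 sa sb (D (sm r x)) (map (\<lambda>(u, v). (sa r u, v)) (D x))"
  using assms unfolding lin_to_tensor_def by auto

lemma lin_to_tensor_zero: "lin_to_tensor sm sa sb D \<Longrightarrow> teq2 sa sb (D 0) []"
  using lin_to_tensorD(1)[of sm sa sb D 0 0] teq2_append_cancel[of sa sb "[]" "D 0" "D 0"]
  by (auto intro: teq2_sym)

lemma lin_to_tensor_sum_list:
  assumes "lin_to_tensor sm sa sb D"
  shows "teq2 sa sb (D (sum_list (map f xs))) (concat (map (\<lambda>i. D (f i)) xs))"
proof (induction xs)
  case Nil
  then show ?case by (simp add: lin_to_tensor_zero[OF assms])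
next
  case (Cons i xs)
  have "teq2 sa sb (D (f i + sum_list (map f xs))) (D (f i) @ D (sum_list (map f xs)))"
    by (rule lin_to_tensorD(1)[OF assms])
  also have "teq2 sa sb \<dots> (D (f i) @ concat (map (\<lambda>i. D (f i)) xs))"
    by (rule teq2_append[OF teq2_refl Cons])
  finally show ?case by simp
qed

lemma lin_to_tensor_comp:
  "lin_to_tensor sm sa sb D \<Longrightarrow> k_linear sx sm f \<Longrightarrow> lin_to_tensor sx sa sb (\<lambda>x. D (f x))"
  unfolding lin_to_tensor_def k_linear_def by auto

lemma lin_to_tensor_single_left: "k_linear sm sc f \<Longrightarrow> lin_to_tensor sm sc sd (\<lambda>x. [(f x, b)])"
  unfolding lin_to_tensor_def by (auto simp: k_linearD teq2_add_left teq2_refl)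

lemma lin_to_tensor_single_right: "k_linear sm sd f \<Longrightarrow> lin_to_tensor sm sc sd (\<lambda>x. [(a, f x)])"
  unfolding lin_to_tensor_def by (auto simp: k_linearD teq2_add_right teq2_sym[OF teq2_scale])

lemma lin_to_tensor_concat:
  assumes "\<And>i. i \<in> set xs \<Longrightarrow> lin_to_tensor sm sc sd (g i)"
  shows "lin_to_tensor sm sc sd (\<lambda>x. concat (map (\<lambda>i. g i x) xs))"
  unfolding lin_to_tensor_def
proof (intro conjI allI)
  fix x y
  have "teq2 sc sd (concat (map (\<lambda>i. g i (x + y)) xs)) (concat (map (\<lambda>i. g i x @ g i y) xs))"
    by (rule teq2_concat_map) (rule lin_to_tensorD(1)[OF assms])
  also have "teq2 sc sd \<dots> (concat (map (\<lambda>i. g i x) xs) @ concat (map (\<lambda>i. g i y) xs))"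
    by (rule teq2_formal_sum_eqI) (simp add: formal_sum_concat o_def sum_list_addf)
  finally show "teq2 sc sd (concat (map (\<lambda>i. g i (x + y)) xs))
      (concat (map (\<lambda>i. g i x) xs) @ concat (map (\<lambda>i. g i y) xs))" .
next
  fix r x
  have "teq2 sc sd (concat (map (\<lambda>i. g i (sm r x)) xs))
      (concat (map (\<lambda>i. map (\<lambda>(u, v). (sc r u, v)) (g i x)) xs))"
    by (rule teq2_concat_map) (rule lin_to_tensorD(2)[OF assms])
  then show "teq2 sc sd (concat (map (\<lambda>i. g i (sm r x)) xs))
      (map (\<lambda>(u, v). (sc r u, v)) (concat (map (\<lambda>i. g i x) xs)))"
    by (simp add: map_concat o_def)
qed

lemma lin_to_tensor_sw_concat:
  "(\<And>a b. (a, b) \<in> set xs \<Longrightarrow> lin_to_tensor sm sc sd (g a b)) \<Longrightarrow>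
    lin_to_tensor sm sc sd (\<lambda>x. sw_concat xs (\<lambda>a b. g a b x))"
  by (rule lin_to_tensor_concat) (auto split: prod.split)

lemma teq2_sw_sum_eq:
  fixes f :: "'a::ab_group_add \<Rightarrow> 'b::ab_group_add \<Rightarrow> 'm::ring_1"
  assumes "teq2 sa sb xs ys"
    and "\<And>b. k_linear sa sm (\<lambda>a. f a b)" and "\<And>a. k_linear sb sm (f a)"
  shows "sw_sum xs f = sw_sum ys f"
proof -
  have "sw_sum xs f - sw_sum ys f \<in> {0}"
    by (rule tensor2_eq_balanced_map[OF assms(1) add_subgroup_zero_set])
       (auto simp: k_linearD[OF assms(2)] k_linearD[OF assms(3)])
  then show ?thesis by simp
qed

lemma teq3_sum_eq:
  fixes f :: "'a::ab_group_add \<Rightarrow> 'b::ab_group_add \<Rightarrow> 'e::ab_group_add \<Rightarrow> 'm::ring_1"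
  assumes "teq3 sa sb se xs ys"
    and "\<And>b e. k_linear sa sm (\<lambda>a. f a b e)" and "\<And>a e. k_linear sb sm (\<lambda>b. f a b e)"
    and "\<And>a b. k_linear se sm (f a b)"
  shows "sum_list (map (\<lambda>(a, b, e). f a b e) xs) = sum_list (map (\<lambda>(a, b, e). f a b e) ys)"
proof -
  have "sum_list (map (\<lambda>(a, b, e). f a b e) xs) - sum_list (map (\<lambda>(a, b, e). f a b e) ys) \<in> {0}"
    by (rule teq3_balanced_map[OF assms(1) add_subgroup_zero_set])
       (auto simp: k_linearD[OF assms(2)] k_linearD[OF assms(3)] k_linearD[OF assms(4)])
  then show ?thesis by simp
qed

lemma teq2_bilinear_scale:
  assumes "lin_to_tensor sa sc sd (\<lambda>a. g a b)" "lin_to_tensor sb sc sd (\<lambda>b. g a b)"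
  shows "teq2 sc sd (g (sa r a) b) (g a (sb r b))"
  using lin_to_tensorD(2)[OF assms(1)] lin_to_tensorD(2)[OF assms(2)] by (meson teq2_sym teq2_trans)

lemma teq2_sw_concat:
  assumes "teq2 sa sb xs ys"
    and l1: "\<And>b. lin_to_tensor sa sc sd (\<lambda>a. g a b)" and l2: "\<And>a. lin_to_tensor sb sc sd (g a)"
  shows "teq2 sc sd (sw_concat xs g) (sw_concat ys g)"
proof -
  let ?g = "\<lambda>(a, b). formal_sum (g a b)"
  have "sum_list (map ?g xs) - sum_list (map ?g ys) \<in> tker2 UNIV sc UNIV sd"
  proof (rule tensor2_eq_balanced_map[OF assms(1) add_subgroup_tker2])
    fix a a' b
    show "?g (a + a', b) - ?g (a, b) - ?g (a', b) \<in> tker2 UNIV sc UNIV sd"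
      using lin_to_tensorD(1)[OF l1] by (simp add: teq2_iff_formal_sum diff_diff_eq)
  next
    fix a b b'
    show "?g (a, b + b') - ?g (a, b) - ?g (a, b') \<in> tker2 UNIV sc UNIV sd"
      using lin_to_tensorD(1)[OF l2] by (simp add: teq2_iff_formal_sum diff_diff_eq)
  next
    fix a b r
    show "?g (sa r a, b) - ?g (a, sb r b) \<in> tker2 UNIV sc UNIV sd"
      using teq2_bilinear_scale[OF l1 l2] by (simp add: teq2_iff_formal_sum)
  qed
  then show ?thesis by (simp add: teq2_iff_formal_sum formal_sum_concat o_def split_def)
qed

lemma teq3_concat:
  assumes "teq3 sa sb se xs ys"
    and l1: "\<And>b e. lin_to_tensor sa sc sd (\<lambda>a. g a b e)" and l2: "\<And>a e. lin_to_tensor sb sc sd (\<lambda>b. g a b e)"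
    and l3: "\<And>a b. lin_to_tensor se sc sd (g a b)"
  shows "teq2 sc sd (concat (map (\<lambda>(a, b, e). g a b e) xs)) (concat (map (\<lambda>(a, b, e). g a b e) ys))"
proof -
  let ?g = "\<lambda>(a, b, e). formal_sum (g a b e)"
  have "sum_list (map ?g xs) - sum_list (map ?g ys) \<in> tker2 UNIV sc UNIV sd"
  proof (rule teq3_balanced_map[OF assms(1) add_subgroup_tker2])
    fix a a' b e
    show "?g (a + a', b, e) - ?g (a, b, e) - ?g (a', b, e) \<in> tker2 UNIV sc UNIV sd"
      using lin_to_tensorD(1)[OF l1] by (simp add: teq2_iff_formal_sum diff_diff_eq)
  next
    fix a b b' e
    show "?g (a, b + b', e) - ?g (a, b, e) - ?g (a, b', e) \<in> tker2 UNIV sc UNIV sd"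
      using lin_to_tensorD(1)[OF l2] by (simp add: teq2_iff_formal_sum diff_diff_eq)
  next
    fix a b e e'
    show "?g (a, b, e + e') - ?g (a, b, e) - ?g (a, b, e') \<in> tker2 UNIV sc UNIV sd"
      using lin_to_tensorD(1)[OF l3] by (simp add: teq2_iff_formal_sum diff_diff_eq)
  next
    fix r a b e
    show "?g (sa r a, b, e) - ?g (a, sb r b, e) \<in> tker2 UNIV sc UNIV sd"
      using teq2_bilinear_scale[OF l1 l2] by (simp add: teq2_iff_formal_sum)
  next
    fix a r b e
    show "?g (a, sb r b, e) - ?g (a, b, se r e) \<in> tker2 UNIV sc UNIV sd"
      using teq2_bilinear_scale[OF l2 l3] by (simp add: teq2_iff_formal_sum)
  qed
  then show ?thesis by (simp add: teq2_iff_formal_sum formal_sum_concat o_def split_def)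
qed

lemma k_linear_sw_sum_tensor:
  fixes f :: "'a::ab_group_add \<Rightarrow> 'b::ab_group_add \<Rightarrow> 'm::ring_1"
  assumes D: "lin_to_tensor sx sa sb D" and m: "module sm"
    and l1: "\<And>b. k_linear sa sm (\<lambda>a. f a b)" and l2: "\<And>a. k_linear sb sm (f a)"
  shows "k_linear sx sm (\<lambda>x. sw_sum (D x) f)"
  unfolding k_linear_def
proof (intro conjI allI)
  fix x y
  show "sw_sum (D (x + y)) f = sw_sum (D x) f + sw_sum (D y) f"
    using teq2_sw_sum_eq[OF lin_to_tensorD(1)[OF D] l1 l2] by simp
next
  fix r x
  have "sw_sum (D (sx r x)) f = sw_sum (map (\<lambda>(u, v). (sa r u, v)) (D x)) f"
    using teq2_sw_sum_eq[OF lin_to_tensorD(2)[OF D] l1 l2] .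
  also have "\<dots> = sum_list (map (\<lambda>p. sm r (case p of (a, b) \<Rightarrow> f a b)) (D x))"
    by (simp add: split_def o_def k_linearD[OF l1])
  also have "\<dots> = sm r (sw_sum (D x) f)"
    by (simp add: module_scale_sum_list[OF m] o_def)
  finally show "sw_sum (D (sx r x)) f = sm r (sw_sum (D x) f)" .
qed

lemma lin_to_tensor_sw_concat_tensor:
  assumes D: "lin_to_tensor sx sa sb D"
    and l1: "\<And>b. lin_to_tensor sa sc sd (\<lambda>a. g a b)" and l2: "\<And>a. lin_to_tensor sb sc sd (g a)"
  shows "lin_to_tensor sx sc sd (\<lambda>x. sw_concat (D x) g)"
  unfolding lin_to_tensor_def
proof (intro conjI allI)
  fix x y
  show "teq2 sc sd (sw_concat (D (x + y)) g) (sw_concat (D x) g @ sw_concat (D y) g)"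
    using teq2_sw_concat[OF lin_to_tensorD(1)[OF D] l1 l2] by simp
next
  fix r x
  have "teq2 sc sd (sw_concat (D (sx r x)) g) (sw_concat (map (\<lambda>(u, v). (sa r u, v)) (D x)) g)"
    using teq2_sw_concat[OF lin_to_tensorD(2)[OF D] l1 l2] .
  also have "sw_concat (map (\<lambda>(u, v). (sa r u, v)) (D x)) g = sw_concat (D x) (\<lambda>a b. g (sa r a) b)"
    by (simp add: split_def o_def)
  also have "teq2 sc sd \<dots> (sw_concat (D x) (\<lambda>a b. map (\<lambda>(u, v). (sc r u, v)) (g a b)))"
    by (rule teq2_sw_concat_cong) (rule lin_to_tensorD(2)[OF l1])
  also have "sw_concat (D x) (\<lambda>a b. map (\<lambda>(u, v). (sc r u, v)) (g a b)) =
      map (\<lambda>(u, v). (sc r u, v)) (sw_concat (D x) g)"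
    by (simp add: map_concat split_def o_def)
  finally show "teq2 sc sd (sw_concat (D (sx r x)) g) (map (\<lambda>(u, v). (sc r u, v)) (sw_concat (D x) g))" .
qed

section \<open>The product on \<open>V\<^sub>3\<close>\<close>

locale doi_hopf =
  fixes sH :: "'k::comm_ring_1 \<Rightarrow> 'h::ring_1 \<Rightarrow> 'h"
    and DH :: "'h \<Rightarrow> ('h \<times> 'h) list" and eH :: "'h \<Rightarrow> 'k"
    and sA :: "'k \<Rightarrow> 'a::ring_1 \<Rightarrow> 'a" and rho :: "'a \<Rightarrow> ('h \<times> 'a) list"
    and sC :: "'k \<Rightarrow> 'c::ab_group_add \<Rightarrow> 'c" and DC :: "'c \<Rightarrow> ('c \<times> 'c) list"
    and eC :: "'c \<Rightarrow> 'k" and act :: "'c \<Rightarrow> 'h \<Rightarrow> 'c"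
  assumes datum: "doi_hopf_datum sH DH eH sA rho sC DC eC act"
begin

lemma k_algebra_A: "k_algebra sA"
  and lin_rho: "lin_to_tensor sA sH sA rho"
  and coassoc_rho: "teq3 sH sH sA [(h1, h2, a). (h, a) \<leftarrow> rho m, (h1, h2) \<leftarrow> DH h]
                        [(h, h', a'). (h, a) \<leftarrow> rho m, (h', a') \<leftarrow> rho a]"
  and rho_mult: "teq2 sH sA (rho (a * b)) [(h * h', a' * b'). (h, a') \<leftarrow> rho a, (h', b') \<leftarrow> rho b]"
  using datum unfolding doi_hopf_datum_def left_comodule_algebra_def by auto

lemma module_A: "module sA"
  using k_algebra_A unfolding k_algebra_def by auto

lemma lin_DH: "lin_to_tensor sH sH sH DH"
  using datum unfolding doi_hopf_datum_def bialgebra_def k_coalgebra_def by auto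

lemma lin_DC: "lin_to_tensor sC sC sC DC"
  and coassoc_DC: "teq3 sC sC sC [(x1, x2, y). (x, y) \<leftarrow> DC c, (x1, x2) \<leftarrow> DC x]
                     [(x, y1, y2). (x, y) \<leftarrow> DC c, (y1, y2) \<leftarrow> DC y]"
  and counit_DC: "sw_sum (DC c) (\<lambda>x y. sC (eC x) y) = c"
  using datum unfolding doi_hopf_datum_def right_module_coalgebra_def k_coalgebra_def by auto

lemma k_linear_act_left: "k_linear sC sC (\<lambda>c. act c h)"
  and k_linear_act_right: "k_linear sH sC (act c)"
  and act_mult: "act c (g * h) = act (act c g) h"
  and DC_act: "teq2 sC sC (DC (act c h)) [(act x h1, act y h2). (x, y) \<leftarrow> DC c, (h1, h2) \<leftarrow> DH h]"
  using datum unfolding doi_hopf_datum_def right_module_coalgebra_def k_linear_def by auto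

abbreviation V :: "('c \<Rightarrow> 'c \<Rightarrow> 'a) set" where
  "V \<equiv> V3 sH sA rho sC DC act"

lemma V3_linear_left: "\<theta> \<in> V \<Longrightarrow> k_linear sC sA (\<lambda>c. \<theta> c d)"
  and V3_linear_right: "\<theta> \<in> V \<Longrightarrow> k_linear sC sA (\<theta> c)"
  unfolding V3_def k_bilinear_def by auto

lemma V3_mult_right: "\<theta> \<in> V \<Longrightarrow>
    \<theta> c d * a = sw_sum (rho a) (\<lambda>h2 a1. sw_sum (rho a1) (\<lambda>h1 a2. a2 * \<theta> (act c h2) (act d h1)))"
  unfolding V3_def by (auto simp: sum_list_concat o_def split_def)

lemma V3_coaction: "\<theta> \<in> V \<Longrightarrow> teq2 sC sA [(c1, \<theta> c2 d). (c1, c2) \<leftarrow> DC c]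
    [(act d2 h, a). (d1, d2) \<leftarrow> DC d, (h, a) \<leftarrow> rho (\<theta> c d1)]"
  unfolding V3_def by auto

definition V3_prod :: "('c \<Rightarrow> 'c \<Rightarrow> 'a) \<Rightarrow> ('c \<Rightarrow> 'c \<Rightarrow> 'a) \<Rightarrow> 'c \<Rightarrow> 'c \<Rightarrow> 'a" where
  "V3_prod \<theta> \<theta>' c d = sw_sum (DC c) (\<lambda>x c3. sw_sum (DC x) (\<lambda>c1 c2. \<theta> c3 d * \<theta>' c1 c2))"

lemma V3_prod_eq: "V3_prod \<theta> \<theta>' c d = sum_list [\<theta> c3 d * \<theta>' c1 c2. (x, c3) \<leftarrow> DC c, (c1, c2) \<leftarrow> DC x]"
  by (simp add: V3_prod_def sum_list_concat o_def split_def)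

lemma kop_prod_eq_V3_prod:
  assumes t: "\<theta> \<in> V" and t': "\<theta>' \<in> V"
  shows "kop_prod DC act rho \<theta> \<theta>' = V3_prod \<theta> \<theta>'"
proof (intro ext)
  fix c d
  have coaction: "sw_sum [(act d2 h, a). (d1, d2) \<leftarrow> DC d, (h, a) \<leftarrow> rho (\<theta> c2 d1)] (\<lambda>y a. a * \<theta>' c1 y)
     = sw_sum [(y1, \<theta> y2 d). (y1, y2) \<leftarrow> DC c2] (\<lambda>y a. a * \<theta>' c1 y)" for c1 c2
    by (rule teq2_sw_sum_eq[OF teq2_sym[OF V3_coaction[OF t]]])
       (auto intro: k_linear_mult_left[OF k_algebra_A V3_linear_right[OF t']]
         k_linear_mult_right[OF k_algebra_A k_linear_id])
  have coassoc: "sum_list (map (\<lambda>(u, v, w). \<theta> w d * \<theta>' u v) [(x1, x2, y). (x, y) \<leftarrow> DC c, (x1, x2) \<leftarrow> DC x])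
     = sum_list (map (\<lambda>(u, v, w). \<theta> w d * \<theta>' u v) [(x, y1, y2). (x, y) \<leftarrow> DC c, (y1, y2) \<leftarrow> DC y])"
    by (rule teq3_sum_eq[OF coassoc_DC])
       (auto intro: k_linear_mult_left[OF k_algebra_A V3_linear_left[OF t']]
         k_linear_mult_left[OF k_algebra_A V3_linear_right[OF t']]
         k_linear_mult_right[OF k_algebra_A V3_linear_left[OF t]])
  show "kop_prod DC act rho \<theta> \<theta>' c d = V3_prod \<theta> \<theta>' c d"
    using coaction coassoc
    by (simp add: kop_prod_def V3_prod_def sum_list_map_concat sum_list_concat map_concat o_def split_def)
qed

lemma k_bilinear_V3_prod:
  assumes t: "\<theta> \<in> V" and t': "\<theta>' \<in> V"
  shows "k_bilinear sC sA (V3_prod \<theta> \<theta>')"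
  unfolding k_bilinear_def V3_prod_def
  by (intro allI conjI k_linear_sw_sum_tensor[OF lin_DC module_A] k_linear_sw_sum[OF module_A]
      k_linear_mult_left[OF k_algebra_A V3_linear_left[OF t']]
      k_linear_mult_left[OF k_algebra_A V3_linear_right[OF t']]
      k_linear_mult_right[OF k_algebra_A V3_linear_left[OF t]]
      k_linear_mult_right[OF k_algebra_A V3_linear_right[OF t]])

lemma kop_prod_normalized_right_unit:
  assumes t: "\<theta> \<in> V" and t': "\<theta>' \<in> V" and n: "normalized sA DC eC \<theta>"
  shows "kop_prod DC act rho \<theta>' \<theta> = \<theta>'"
proof (intro ext)
  fix c d
  have scale_mult: "sA r (x * y) = x * sA r y" for r x y
    using k_algebra_A unfolding k_algebra_def by blast
  have "kop_prod DC act rho \<theta>' \<theta> c d = sw_sum (DC c) (\<lambda>x c3. \<theta>' c3 d * sw_sum (DC x) \<theta>)"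
    by (simp add: kop_prod_eq_V3_prod[OF t' t] V3_prod_def sum_list_const_mult split_def)
  also have "\<dots> = sw_sum (DC c) (\<lambda>x c3. \<theta>' (sC (eC x) c3) d)"
    using n by (simp add: normalized_def scale_mult[symmetric] k_linearD[OF V3_linear_left[OF t']])
  also have "\<dots> = \<theta>' (sw_sum (DC c) (\<lambda>x c3. sC (eC x) c3)) d"
    by (simp add: k_linear_sum_list[OF V3_linear_left[OF t']] o_def split_def)
  finally show "kop_prod DC act rho \<theta>' \<theta> c d = \<theta>' c d"
    by (simp add: counit_DC)
qed

lemma sw_sum_rho_coassoc:
  assumes "\<And>h2 b. k_linear sH sA (\<lambda>h1. f h1 h2 b)" "\<And>h1 b. k_linear sH sA (\<lambda>h2. f h1 h2 b)"
    "\<And>h1 h2. k_linear sA sA (f h1 h2)"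
  shows "sw_sum (rho m) (\<lambda>h b. sw_sum (DH h) (\<lambda>h1 h2. f h1 h2 b)) =
         sw_sum (rho m) (\<lambda>h b. sw_sum (rho b) (\<lambda>h' b'. f h h' b'))"
  using teq3_sum_eq[OF coassoc_rho, where f=f, OF assms]
  by (simp add: sum_list_concat sum_list_map_concat o_def split_def)

lemma sw_sum_rho_coassoc4:
  fixes \<Phi> :: "'h \<Rightarrow> 'h \<Rightarrow> 'h \<Rightarrow> 'h \<Rightarrow> 'a \<Rightarrow> 'a"
  assumes "\<And>h2 h3 h4 b. k_linear sH sA (\<lambda>h1. \<Phi> h1 h2 h3 h4 b)"
    and "\<And>h1 h3 h4 b. k_linear sH sA (\<lambda>h2. \<Phi> h1 h2 h3 h4 b)"
    and "\<And>h1 h2 h4 b. k_linear sH sA (\<lambda>h3. \<Phi> h1 h2 h3 h4 b)"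
    and "\<And>h1 h2 h3 b. k_linear sH sA (\<lambda>h4. \<Phi> h1 h2 h3 h4 b)"
    and "\<And>h1 h2 h3 h4. k_linear sA sA (\<Phi> h1 h2 h3 h4)"
  shows "sw_sum (rho a) (\<lambda>m2 e0. sw_sum (rho e0) (\<lambda>m1 e00. sw_sum (DH m2) (\<lambda>n1 n2.
            sw_sum (DH n1) (\<lambda>n11 n12. \<Phi> n11 n12 n2 m1 e00)))) =
         sw_sum (rho a) (\<lambda>h1 a1. sw_sum (rho a1) (\<lambda>h2 a2. sw_sum (rho a2) (\<lambda>h3 a3.
            sw_sum (rho a3) (\<lambda>h4 a4. \<Phi> h1 h2 h3 h4 a4))))"
proof -
  define f1 where "f1 n1 n2 e0 = sw_sum (rho e0) (\<lambda>m1 e00. sw_sum (DH n1) (\<lambda>n11 n12. \<Phi> n11 n12 n2 m1 e00))"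
    for n1 n2 e0
  define f2 where "f2 n11 n12 e1 = sw_sum (rho e1) (\<lambda>n2 e0. sw_sum (rho e0) (\<lambda>m1 e00. \<Phi> n11 n12 n2 m1 e00))"
    for n11 n12 e1
  have "sw_sum (rho a) (\<lambda>m2 e0. sw_sum (rho e0) (\<lambda>m1 e00. sw_sum (DH m2) (\<lambda>n1 n2.
            sw_sum (DH n1) (\<lambda>n11 n12. \<Phi> n11 n12 n2 m1 e00)))) =
        sw_sum (rho a) (\<lambda>m2 e0. sw_sum (DH m2) (\<lambda>n1 n2. f1 n1 n2 e0))"
    unfolding f1_def by (rule sw_sum_cong) (rule sw_sum_swap)
  also have "\<dots> = sw_sum (rho a) (\<lambda>n1 e1. sw_sum (rho e1) (\<lambda>n2 e0. f1 n1 n2 e0))"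
    by (rule sw_sum_rho_coassoc) (unfold f1_def; intro k_linear_sw_sum[OF module_A]
        k_linear_sw_sum_tensor[OF lin_DH module_A] k_linear_sw_sum_tensor[OF lin_rho module_A] assms)+
  also have "\<dots> = sw_sum (rho a) (\<lambda>n1 e1. sw_sum (DH n1) (\<lambda>n11 n12. f2 n11 n12 e1))"
  proof (rule sw_sum_cong)
    fix n1 e1
    have "sw_sum (rho e1) (\<lambda>n2 e0. f1 n1 n2 e0) = sw_sum (rho e1) (\<lambda>n2 e0.
        sw_sum (DH n1) (\<lambda>n11 n12. sw_sum (rho e0) (\<lambda>m1 e00. \<Phi> n11 n12 n2 m1 e00)))"
      unfolding f1_def by (rule sw_sum_cong) (rule sw_sum_swap)
    also have "\<dots> = sw_sum (DH n1) (\<lambda>n11 n12. f2 n11 n12 e1)"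
      unfolding f2_def by (rule sw_sum_swap)
    finally show "sw_sum (rho e1) (\<lambda>n2 e0. f1 n1 n2 e0) = sw_sum (DH n1) (\<lambda>n11 n12. f2 n11 n12 e1)" .
  qed
  also have "\<dots> = sw_sum (rho a) (\<lambda>n11 e2. sw_sum (rho e2) (\<lambda>n12 e1. f2 n11 n12 e1))"
    by (rule sw_sum_rho_coassoc) (unfold f2_def; intro k_linear_sw_sum[OF module_A]
        k_linear_sw_sum_tensor[OF lin_rho module_A] assms)+
  finally show ?thesis unfolding f2_def .
qed

definition V3_prod_twisted ::
    "('c \<Rightarrow> 'c \<Rightarrow> 'a) \<Rightarrow> ('c \<Rightarrow> 'c \<Rightarrow> 'a) \<Rightarrow> 'c \<Rightarrow> 'h \<Rightarrow> 'h \<Rightarrow> 'h \<Rightarrow> 'c \<Rightarrow> 'a" where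
  "V3_prod_twisted \<theta> \<theta>' c h1 h2 h3 e = sw_sum (DC c) (\<lambda>x c3. sw_sum (DC x) (\<lambda>c1 c2.
      \<theta> (act c3 h3) e * \<theta>' (act c1 h1) (act c2 h2)))"

lemma k_linear_V3_prod_twisted:
  assumes t: "\<theta> \<in> V" and t': "\<theta>' \<in> V"
  shows "k_linear sH sA (\<lambda>h1. V3_prod_twisted \<theta> \<theta>' c h1 h2 h3 e)"
    "k_linear sH sA (\<lambda>h2. V3_prod_twisted \<theta> \<theta>' c h1 h2 h3 e)"
    "k_linear sH sA (\<lambda>h3. V3_prod_twisted \<theta> \<theta>' c h1 h2 h3 e)"
    "k_linear sC sA (\<lambda>e. V3_prod_twisted \<theta> \<theta>' c h1 h2 h3 e)"
  unfolding V3_prod_twisted_def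
  by (intro k_linear_sw_sum[OF module_A] k_linear_mult_left[OF k_algebra_A]
      k_linear_mult_right[OF k_algebra_A] V3_linear_right[OF t]
      k_linear_comp[OF V3_linear_left[OF t'] k_linear_act_right]
      k_linear_comp[OF V3_linear_right[OF t'] k_linear_act_right]
      k_linear_comp[OF V3_linear_left[OF t] k_linear_act_right])+

lemma V3_prod_act:
  assumes t: "\<theta> \<in> V" and t': "\<theta>' \<in> V"
  shows "V3_prod \<theta> \<theta>' (act c m) e =
    sw_sum (DH m) (\<lambda>n1 n2. sw_sum (DH n1) (\<lambda>n11 n12. V3_prod_twisted \<theta> \<theta>' c n11 n12 n2 e))"
proof -
  define I where "I y z3 = sw_sum (DC y) (\<lambda>z1 z2. \<theta> z3 e * \<theta>' z1 z2)" for y z3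
  have lin: "k_linear sC sA (\<lambda>z1. \<theta> w e * \<theta>' z1 z2)" "k_linear sC sA (\<lambda>z2. \<theta> w e * \<theta>' z1 z2)" for w z1 z2
    by (intro k_linear_mult_left[OF k_algebra_A] V3_linear_left[OF t'] V3_linear_right[OF t'])+
  have I_act: "I (act x n1) w = sw_sum (DC x) (\<lambda>c1 c2. sw_sum (DH n1) (\<lambda>n11 n12.
        \<theta> w e * \<theta>' (act c1 n11) (act c2 n12)))" for x n1 w
    unfolding I_def using teq2_sw_sum_eq[OF DC_act lin]
    by (simp add: sum_list_concat sum_list_map_concat o_def split_def)
  have "V3_prod \<theta> \<theta>' (act c m) e = sw_sum (DC (act c m)) I"
    unfolding V3_prod_def I_def by simp
  also have "\<dots> = sw_sum [(act x h1, act y h2). (x, y) \<leftarrow> DC c, (h1, h2) \<leftarrow> DH m] I"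
    by (rule teq2_sw_sum_eq[OF DC_act, where sm=sA])
       (unfold I_def; intro k_linear_sw_sum_tensor[OF lin_DC module_A]
        k_linear_sw_sum[OF module_A] lin k_linear_mult_right[OF k_algebra_A V3_linear_left[OF t]])+
  also have "\<dots> = sw_sum (DC c) (\<lambda>x c3. sw_sum (DH m) (\<lambda>n1 n2. sw_sum (DC x) (\<lambda>c1 c2.
      sw_sum (DH n1) (\<lambda>n11 n12. \<theta> (act c3 n2) e * \<theta>' (act c1 n11) (act c2 n12)))))"
    by (simp add: I_act sum_list_concat sum_list_map_concat o_def split_def)
  also have "\<dots> = sw_sum (DC c) (\<lambda>x c3. sw_sum (DC x) (\<lambda>c1 c2. sw_sum (DH m) (\<lambda>n1 n2.
      sw_sum (DH n1) (\<lambda>n11 n12. \<theta> (act c3 n2) e * \<theta>' (act c1 n11) (act c2 n12)))))"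
    by (rule sw_sum_cong) (rule sw_sum_swap)
  also have "\<dots> = sw_sum (DC c) (\<lambda>x c3. sw_sum (DH m) (\<lambda>n1 n2. sw_sum (DH n1) (\<lambda>n11 n12.
      sw_sum (DC x) (\<lambda>c1 c2. \<theta> (act c3 n2) e * \<theta>' (act c1 n11) (act c2 n12)))))"
    by (rule sw_sum_cong) (rule sw_sum_swap_nested2)
  also have "\<dots> = sw_sum (DH m) (\<lambda>n1 n2. sw_sum (DH n1) (\<lambda>n11 n12. V3_prod_twisted \<theta> \<theta>' c n11 n12 n2 e))"
    unfolding V3_prod_twisted_def by (rule sw_sum_swap_nested2)
  finally show ?thesis .
qed

lemma V3_mult_right_twice:
  assumes t: "\<theta> \<in> V" and t': "\<theta>' \<in> V"
  shows "\<theta> c3 d * \<theta>' c1 c2 * a = sw_sum (rho a) (\<lambda>h1 a1. sw_sum (rho a1) (\<lambda>h2 a2. sw_sum (rho a2) (\<lambda>h3 a3.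
    sw_sum (rho a3) (\<lambda>h4 a4. a4 * (\<theta> (act c3 h3) (act d h4) * \<theta>' (act c1 h1) (act c2 h2))))))"
proof -
  have "\<theta> c3 d * \<theta>' c1 c2 * a = \<theta> c3 d * (\<theta>' c1 c2 * a)"
    by (simp add: mult.assoc)
  also have "\<dots> = sw_sum (rho a) (\<lambda>h1 a1. sw_sum (rho a1) (\<lambda>h2 a2.
      (\<theta> c3 d * a2) * \<theta>' (act c1 h1) (act c2 h2)))"
    by (simp add: V3_mult_right[OF t'] sum_list_const_mult[symmetric] split_def mult.assoc o_def)
  also have "\<dots> = sw_sum (rho a) (\<lambda>h1 a1. sw_sum (rho a1) (\<lambda>h2 a2. sw_sum (rho a2) (\<lambda>h3 a3.
      sw_sum (rho a3) (\<lambda>h4 a4. a4 * (\<theta> (act c3 h3) (act d h4) * \<theta>' (act c1 h1) (act c2 h2))))))"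
    by (simp add: V3_mult_right[OF t] sum_list_mult_const[symmetric] split_def mult.assoc o_def)
  finally show ?thesis .
qed

lemma V3_prod_mult_right:
  assumes t: "\<theta> \<in> V" and t': "\<theta>' \<in> V"
  shows "V3_prod \<theta> \<theta>' c d * a =
    sw_sum (rho a) (\<lambda>h2 a1. sw_sum (rho a1) (\<lambda>h1 a2. a2 * V3_prod \<theta> \<theta>' (act c h2) (act d h1)))"
proof -
  define \<Phi> where "\<Phi> h1 h2 h3 h4 b = b * V3_prod_twisted \<theta> \<theta>' c h1 h2 h3 (act d h4)" for h1 h2 h3 h4 b
  have "V3_prod \<theta> \<theta>' c d * a = sw_sum (DC c) (\<lambda>x c3. sw_sum (DC x) (\<lambda>c1 c2. \<theta> c3 d * \<theta>' c1 c2 * a))"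
    by (simp add: V3_prod_def sum_list_mult_const split_def)
  also have "\<dots> = sw_sum (DC c) (\<lambda>x c3. sw_sum (DC x) (\<lambda>c1 c2.
     sw_sum (rho a) (\<lambda>h1 a1. sw_sum (rho a1) (\<lambda>h2 a2. sw_sum (rho a2) (\<lambda>h3 a3.
       sw_sum (rho a3) (\<lambda>h4 a4. a4 * (\<theta> (act c3 h3) (act d h4) * \<theta>' (act c1 h1) (act c2 h2))))))))"
    by (intro sw_sum_cong V3_mult_right_twice[OF t t'])
  also have "\<dots> = sw_sum (DC c) (\<lambda>x c3.
     sw_sum (rho a) (\<lambda>h1 a1. sw_sum (rho a1) (\<lambda>h2 a2. sw_sum (rho a2) (\<lambda>h3 a3.
       sw_sum (rho a3) (\<lambda>h4 a4. sw_sum (DC x) (\<lambda>c1 c2.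
         a4 * (\<theta> (act c3 h3) (act d h4) * \<theta>' (act c1 h1) (act c2 h2))))))))"
    by (rule sw_sum_cong) (rule sw_sum_swap_nested4)
  also have "\<dots> = sw_sum (rho a) (\<lambda>h1 a1. sw_sum (rho a1) (\<lambda>h2 a2. sw_sum (rho a2) (\<lambda>h3 a3.
       sw_sum (rho a3) (\<lambda>h4 a4. sw_sum (DC c) (\<lambda>x c3. sw_sum (DC x) (\<lambda>c1 c2.
         a4 * (\<theta> (act c3 h3) (act d h4) * \<theta>' (act c1 h1) (act c2 h2))))))))"
    by (rule sw_sum_swap_nested4)
  also have "\<dots> = sw_sum (rho a) (\<lambda>h1 a1. sw_sum (rho a1) (\<lambda>h2 a2. sw_sum (rho a2) (\<lambda>h3 a3.
       sw_sum (rho a3) (\<lambda>h4 a4. \<Phi> h1 h2 h3 h4 a4))))"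
    by (simp add: \<Phi>_def V3_prod_twisted_def sum_list_const_mult split_def)
  also have "\<dots> = sw_sum (rho a) (\<lambda>m2 e0. sw_sum (rho e0) (\<lambda>m1 e00. sw_sum (DH m2) (\<lambda>n1 n2.
       sw_sum (DH n1) (\<lambda>n11 n12. \<Phi> n11 n12 n2 m1 e00))))"
    by (rule sw_sum_rho_coassoc4[symmetric]; unfold \<Phi>_def;
        intro k_linear_mult_left[OF k_algebra_A] k_linear_mult_right[OF k_algebra_A k_linear_id]
          k_linear_V3_prod_twisted[OF t t']
          k_linear_comp[OF k_linear_V3_prod_twisted(4)[OF t t'] k_linear_act_right])
  also have "\<dots> = sw_sum (rho a) (\<lambda>h2 a1. sw_sum (rho a1) (\<lambda>h1 a2. a2 * V3_prod \<theta> \<theta>' (act c h2) (act d h1)))"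
    by (simp add: \<Phi>_def V3_prod_act[OF t t'] sum_list_const_mult o_def split_def)
  finally show ?thesis .
qed

lemma teq2_sw_concat_coassoc:
  assumes "\<And>b e. lin_to_tensor sC sc sd (\<lambda>a. g a b e)" "\<And>a e. lin_to_tensor sC sc sd (\<lambda>b. g a b e)"
    "\<And>a b. lin_to_tensor sC sc sd (g a b)"
  shows "teq2 sc sd (sw_concat (DC c) (\<lambda>x y. sw_concat (DC x) (\<lambda>x1 x2. g x1 x2 y)))
                    (sw_concat (DC c) (\<lambda>x y. sw_concat (DC y) (\<lambda>y1 y2. g x y1 y2)))"
  using teq3_concat[OF coassoc_DC, where g=g, OF assms] by (simp add: concat_map_concat o_def split_def)

text \<open>The iterated coproduct \<open>\<Delta>\<^sup>3 c\<close> in the bracketings \<open>((12)3)4\<close>, \<open>(1(23))4\<close>,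
  \<open>1((23)4)\<close> and \<open>(12)(34)\<close>.\<close>

definition Delta3_ll :: "('c \<Rightarrow> 'c \<Rightarrow> 'c \<Rightarrow> 'c \<Rightarrow> 'x list) \<Rightarrow> 'c \<Rightarrow> 'x list" where
  "Delta3_ll F c =
    sw_concat (DC c) (\<lambda>p w4. sw_concat (DC p) (\<lambda>q w3. sw_concat (DC q) (\<lambda>w1 w2. F w1 w2 w3 w4)))"

definition Delta3_lr :: "('c \<Rightarrow> 'c \<Rightarrow> 'c \<Rightarrow> 'c \<Rightarrow> 'x list) \<Rightarrow> 'c \<Rightarrow> 'x list" where
  "Delta3_lr F c =
    sw_concat (DC c) (\<lambda>p w4. sw_concat (DC p) (\<lambda>w1 r. sw_concat (DC r) (\<lambda>w2 w3. F w1 w2 w3 w4)))"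

definition Delta3_rl :: "('c \<Rightarrow> 'c \<Rightarrow> 'c \<Rightarrow> 'c \<Rightarrow> 'x list) \<Rightarrow> 'c \<Rightarrow> 'x list" where
  "Delta3_rl F c =
    sw_concat (DC c) (\<lambda>w1 s. sw_concat (DC s) (\<lambda>r w4. sw_concat (DC r) (\<lambda>w2 w3. F w1 w2 w3 w4)))"

definition Delta3_bal :: "('c \<Rightarrow> 'c \<Rightarrow> 'c \<Rightarrow> 'c \<Rightarrow> 'x list) \<Rightarrow> 'c \<Rightarrow> 'x list" where
  "Delta3_bal F c =
    sw_concat (DC c) (\<lambda>q y. sw_concat (DC q) (\<lambda>w1 w2. sw_concat (DC y) (\<lambda>w3 w4. F w1 w2 w3 w4)))"

context
  fixes sx :: "'k \<Rightarrow> 'x::ab_group_add \<Rightarrow> 'x" and sy :: "'k \<Rightarrow> 'y::ab_group_add \<Rightarrow> 'y"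
    and F :: "'c \<Rightarrow> 'c \<Rightarrow> 'c \<Rightarrow> 'c \<Rightarrow> ('x \<times> 'y) list"
  assumes F1: "\<And>w2 w3 w4. lin_to_tensor sC sx sy (\<lambda>w1. F w1 w2 w3 w4)"
    and F2: "\<And>w1 w3 w4. lin_to_tensor sC sx sy (\<lambda>w2. F w1 w2 w3 w4)"
    and F3: "\<And>w1 w2 w4. lin_to_tensor sC sx sy (\<lambda>w3. F w1 w2 w3 w4)"
    and F4: "\<And>w1 w2 w3. lin_to_tensor sC sx sy (\<lambda>w4. F w1 w2 w3 w4)"
begin

lemma Delta3_ll_bal: "teq2 sx sy (Delta3_ll F c) (Delta3_bal F c)"
proof -
  have "teq2 sx sy (Delta3_ll F c)
      (sw_concat (DC c) (\<lambda>q y. sw_concat (DC y) (\<lambda>w3 w4. sw_concat (DC q) (\<lambda>w1 w2. F w1 w2 w3 w4))))"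
    unfolding Delta3_ll_def
    by (rule teq2_sw_concat_coassoc[where g="\<lambda>q w3 w4. sw_concat (DC q) (\<lambda>w1 w2. F w1 w2 w3 w4)"])
       (intro lin_to_tensor_sw_concat_tensor[OF lin_DC] lin_to_tensor_sw_concat F1 F2 F3 F4)+
  also have "teq2 sx sy \<dots> (Delta3_bal F c)"
    unfolding Delta3_bal_def split_def by (rule teq2_concat_map) (rule teq2_concat_swap)
  finally show ?thesis .
qed

lemma Delta3_ll_lr: "teq2 sx sy (Delta3_ll F c) (Delta3_lr F c)"
  unfolding Delta3_ll_def Delta3_lr_def
  by (rule teq2_sw_concat_cong, rule teq2_sw_concat_coassoc) (intro F1 F2 F3 F4)+

lemma Delta3_lr_rl: "teq2 sx sy (Delta3_lr F c) (Delta3_rl F c)"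
  unfolding Delta3_lr_def Delta3_rl_def
  by (rule teq2_sw_concat_coassoc[where g="\<lambda>w1 r w4. sw_concat (DC r) (\<lambda>w2 w3. F w1 w2 w3 w4)"])
     (intro lin_to_tensor_sw_concat_tensor[OF lin_DC] lin_to_tensor_sw_concat F1 F2 F3 F4)+

end

text \<open>Summed over \<open>\<Delta>\<^sup>3 c\<close>, these give the two sides of the second condition of \<open>V\<^sub>3\<close>
  for \<open>V3_prod \<theta> \<theta>'\<close>.\<close>

definition V3_prod_lhs_summand ::
    "('c \<Rightarrow> 'c \<Rightarrow> 'a) \<Rightarrow> ('c \<Rightarrow> 'c \<Rightarrow> 'a) \<Rightarrow> 'c \<Rightarrow> 'c \<Rightarrow> 'c \<Rightarrow> 'c \<Rightarrow> 'c \<Rightarrow> ('c \<times> 'a) list" where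
  "V3_prod_lhs_summand \<theta> \<theta>' d w1 w2 w3 w4 = [(w1, \<theta> w4 d * \<theta>' w2 w3)]"

definition V3_prod_rhs_summand ::
    "('c \<Rightarrow> 'c \<Rightarrow> 'a) \<Rightarrow> ('c \<Rightarrow> 'c \<Rightarrow> 'a) \<Rightarrow> 'c \<Rightarrow> 'c \<Rightarrow> 'c \<Rightarrow> 'c \<Rightarrow> 'c \<Rightarrow> ('c \<times> 'a) list" where
  "V3_prod_rhs_summand \<theta> \<theta>' d w1 w2 w3 w4 = sw_concat (rho (\<theta>' w1 w2)) (\<lambda>h b. [(act w3 h, \<theta> w4 d * b)])"

lemma lin_to_tensor_V3_prod_lhs_summand:
  assumes t: "\<theta> \<in> V" and t': "\<theta>' \<in> V"
  shows "lin_to_tensor sC sC sA (\<lambda>w1. V3_prod_lhs_summand \<theta> \<theta>' d w1 w2 w3 w4)"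
    "lin_to_tensor sC sC sA (\<lambda>w2. V3_prod_lhs_summand \<theta> \<theta>' d w1 w2 w3 w4)"
    "lin_to_tensor sC sC sA (\<lambda>w3. V3_prod_lhs_summand \<theta> \<theta>' d w1 w2 w3 w4)"
    "lin_to_tensor sC sC sA (\<lambda>w4. V3_prod_lhs_summand \<theta> \<theta>' d w1 w2 w3 w4)"
  unfolding V3_prod_lhs_summand_def
  by (intro lin_to_tensor_single_left lin_to_tensor_single_right k_linear_id
      k_linear_mult_left[OF k_algebra_A V3_linear_left[OF t']]
      k_linear_mult_left[OF k_algebra_A V3_linear_right[OF t']]
      k_linear_mult_right[OF k_algebra_A V3_linear_left[OF t]])+

lemma lin_to_tensor_V3_prod_rhs_summand:
  assumes t: "\<theta> \<in> V" and t': "\<theta>' \<in> V"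
  shows "lin_to_tensor sC sC sA (\<lambda>w1. V3_prod_rhs_summand \<theta> \<theta>' d w1 w2 w3 w4)"
    "lin_to_tensor sC sC sA (\<lambda>w2. V3_prod_rhs_summand \<theta> \<theta>' d w1 w2 w3 w4)"
    "lin_to_tensor sC sC sA (\<lambda>w3. V3_prod_rhs_summand \<theta> \<theta>' d w1 w2 w3 w4)"
    "lin_to_tensor sC sC sA (\<lambda>w4. V3_prod_rhs_summand \<theta> \<theta>' d w1 w2 w3 w4)"
  unfolding V3_prod_rhs_summand_def
  by (intro lin_to_tensor_sw_concat_tensor[OF lin_to_tensor_comp[OF lin_rho V3_linear_left[OF t']]]
      lin_to_tensor_sw_concat_tensor[OF lin_to_tensor_comp[OF lin_rho V3_linear_right[OF t']]]
      lin_to_tensor_sw_concat lin_to_tensor_single_left lin_to_tensor_single_right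
      k_linear_act_left k_linear_act_right k_linear_mult_left[OF k_algebra_A k_linear_id]
      k_linear_mult_right[OF k_algebra_A V3_linear_left[OF t]])+

lemma V3_prod_coaction_lhs:
  "teq2 sC sA [(c1, V3_prod \<theta> \<theta>' c2 d). (c1, c2) \<leftarrow> DC c] (Delta3_rl (V3_prod_lhs_summand \<theta> \<theta>' d) c)"
proof -
  have singletons: "[(c1, V3_prod \<theta> \<theta>' c2 d). (c1, c2) \<leftarrow> DC c] =
      sw_concat (DC c) (\<lambda>c1 c2. [(c1, V3_prod \<theta> \<theta>' c2 d)])"
    by (simp add: split_def)
  have "teq2 sC sA [(c1, V3_prod \<theta> \<theta>' c2 d)]
      (sw_concat (DC c2) (\<lambda>r w4. sw_concat (DC r) (\<lambda>w2 w3. V3_prod_lhs_summand \<theta> \<theta>' d c1 w2 w3 w4)))"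
    for c1 c2
    using teq2_sum_list_right[of sC sA c1 "[\<theta> c3 d * \<theta>' c1' c2'. (x, c3) \<leftarrow> DC c2, (c1', c2') \<leftarrow> DC x]"]
    by (simp add: V3_prod_eq V3_prod_lhs_summand_def map_concat o_def split_def)
  then show ?thesis
    unfolding Delta3_rl_def singletons by (rule teq2_sw_concat_cong)
qed

lemma rho_V3_prod:
  "teq2 sH sA (rho (V3_prod \<theta> \<theta>' c d)) (sw_concat (DC c) (\<lambda>x c3. sw_concat (DC x) (\<lambda>c1 c2.
     [(h * h', a' * b'). (h, a') \<leftarrow> rho (\<theta> c3 d), (h', b') \<leftarrow> rho (\<theta>' c1 c2)])))"
proof -
  have "teq2 sH sA (rho (V3_prod \<theta> \<theta>' c d))
      (sw_concat (DC c) (\<lambda>x c3. rho (sw_sum (DC x) (\<lambda>c1 c2. \<theta> c3 d * \<theta>' c1 c2))))"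
    unfolding V3_prod_def using lin_to_tensor_sum_list[OF lin_rho] by (simp add: split_def)
  also have "teq2 sH sA \<dots> (sw_concat (DC c) (\<lambda>x c3. sw_concat (DC x) (\<lambda>c1 c2. rho (\<theta> c3 d * \<theta>' c1 c2))))"
    by (rule teq2_sw_concat_cong) (use lin_to_tensor_sum_list[OF lin_rho] in \<open>simp add: split_def\<close>)
  also have "teq2 sH sA \<dots> (sw_concat (DC c) (\<lambda>x c3. sw_concat (DC x) (\<lambda>c1 c2.
      [(h * h', a' * b'). (h, a') \<leftarrow> rho (\<theta> c3 d), (h', b') \<leftarrow> rho (\<theta>' c1 c2)])))"
    by (intro teq2_sw_concat_cong rho_mult)
  finally show ?thesis .
qed

lemma V3_prod_rhs_summand_coaction:
  assumes t: "\<theta> \<in> V"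
  shows "teq2 sC sA (sw_concat (DC d) (\<lambda>d1 d2. sw_concat (rho (\<theta> c3 d1)) (\<lambda>h a.
      sw_concat (rho (\<theta>' c1 c2)) (\<lambda>h' b. [(act (act d2 h) h', a * b)]))))
    (sw_concat (DC c3) (\<lambda>w3 w4. V3_prod_rhs_summand \<theta> \<theta>' d c1 c2 w3 w4))"
proof -
  let ?g = "\<lambda>y a. sw_concat (rho (\<theta>' c1 c2)) (\<lambda>h' b. [(act y h', a * b)])"
  have "sw_concat (DC d) (\<lambda>d1 d2. sw_concat (rho (\<theta> c3 d1)) (\<lambda>h a.
      sw_concat (rho (\<theta>' c1 c2)) (\<lambda>h' b. [(act (act d2 h) h', a * b)]))) =
      sw_concat [(act d2 h, a). (d1, d2) \<leftarrow> DC d, (h, a) \<leftarrow> rho (\<theta> c3 d1)] ?g"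
    by (simp add: concat_map_concat concat_concat map_concat o_def split_def)
  also have "teq2 sC sA \<dots> (sw_concat [(y1, \<theta> y2 d). (y1, y2) \<leftarrow> DC c3] ?g)"
    by (rule teq2_sw_concat[OF teq2_sym[OF V3_coaction[OF t]]])
       (intro lin_to_tensor_sw_concat lin_to_tensor_single_left lin_to_tensor_single_right
         k_linear_act_left k_linear_mult_right[OF k_algebra_A k_linear_id])+
  also have "sw_concat [(y1, \<theta> y2 d). (y1, y2) \<leftarrow> DC c3] ?g =
      sw_concat (DC c3) (\<lambda>w3 w4. V3_prod_rhs_summand \<theta> \<theta>' d c1 c2 w3 w4)"
    by (simp add: V3_prod_rhs_summand_def concat_map_concat concat_concat map_concat o_def split_def)
  finally show ?thesis .
qed

lemma V3_prod_coaction_rhs: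
  assumes t: "\<theta> \<in> V"
  shows "teq2 sC sA [(act d2 h, a). (d1, d2) \<leftarrow> DC d, (h, a) \<leftarrow> rho (V3_prod \<theta> \<theta>' c d1)]
    (Delta3_bal (V3_prod_rhs_summand \<theta> \<theta>' d) c)"
proof -
  let ?prod = "\<lambda>d1 x c3 c1 c2. [(h * h', a * b). (h, a) \<leftarrow> rho (\<theta> c3 d1), (h', b) \<leftarrow> rho (\<theta>' c1 c2)]"
  have "[(act d2 h, a). (d1, d2) \<leftarrow> DC d, (h, a) \<leftarrow> rho (V3_prod \<theta> \<theta>' c d1)] =
      sw_concat (DC d) (\<lambda>d1 d2. sw_concat (rho (V3_prod \<theta> \<theta>' c d1)) (\<lambda>h a. [(act d2 h, a)]))"
    by (simp add: split_def)
  also have "teq2 sC sA \<dots> (sw_concat (DC d) (\<lambda>d1 d2.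
      sw_concat (sw_concat (DC c) (\<lambda>x c3. sw_concat (DC x) (?prod d1 x c3))) (\<lambda>h a. [(act d2 h, a)])))"
    by (rule teq2_sw_concat_cong, rule teq2_sw_concat[OF rho_V3_prod])
       (intro lin_to_tensor_single_left lin_to_tensor_single_right k_linear_act_right k_linear_id)+
  also have "teq2 sC sA \<dots> (sw_concat (DC c) (\<lambda>x c3. sw_concat (DC x) (\<lambda>c1 c2. sw_concat (DC d) (\<lambda>d1 d2.
      sw_concat (rho (\<theta> c3 d1)) (\<lambda>h a. sw_concat (rho (\<theta>' c1 c2)) (\<lambda>h' b. [(act (act d2 h) h', a * b)]))))))"
    by (rule teq2_formal_sum_eqI)
       (simp add: formal_sum_concat formal_sum_map concat_map_concat map_concat sum_list_concat
         sum_list_map_concat o_def split_def act_mult, rule sum_list_swap_nested2)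
  also have "teq2 sC sA \<dots> (Delta3_bal (V3_prod_rhs_summand \<theta> \<theta>' d) c)"
    unfolding Delta3_bal_def
    by (intro teq2_sw_concat_cong V3_prod_rhs_summand_coaction[OF t])
  finally show ?thesis .
qed

lemma Delta3_lr_rhs_summand:
  assumes t': "\<theta>' \<in> V"
  shows "teq2 sC sA (Delta3_lr (V3_prod_rhs_summand \<theta> \<theta>' d) c) (Delta3_ll (V3_prod_lhs_summand \<theta> \<theta>' d) c)"
proof -
  have "teq2 sC sA (sw_concat (DC r) (\<lambda>w2 w3. V3_prod_rhs_summand \<theta> \<theta>' d w1 w2 w3 w4))
      (sw_concat (DC w1) (\<lambda>u1 u2. V3_prod_lhs_summand \<theta> \<theta>' d u1 u2 r w4))" for w1 r w4
  proof -
    let ?g = "\<lambda>y b. [(y, \<theta> w4 d * b)]"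
    have "sw_concat (DC r) (\<lambda>w2 w3. V3_prod_rhs_summand \<theta> \<theta>' d w1 w2 w3 w4) =
        sw_concat [(act r2 h, a). (r1, r2) \<leftarrow> DC r, (h, a) \<leftarrow> rho (\<theta>' w1 r1)] ?g"
      by (simp add: V3_prod_rhs_summand_def concat_map_concat concat_concat map_concat o_def split_def)
    also have "teq2 sC sA \<dots> (sw_concat [(u1, \<theta>' u2 r). (u1, u2) \<leftarrow> DC w1] ?g)"
      by (rule teq2_sw_concat[OF teq2_sym[OF V3_coaction[OF t']]])
         (intro lin_to_tensor_single_left lin_to_tensor_single_right k_linear_id
           k_linear_mult_left[OF k_algebra_A k_linear_id])+
    also have "sw_concat [(u1, \<theta>' u2 r). (u1, u2) \<leftarrow> DC w1] ?g =
        sw_concat (DC w1) (\<lambda>u1 u2. V3_prod_lhs_summand \<theta> \<theta>' d u1 u2 r w4)"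
      by (simp add: V3_prod_lhs_summand_def o_def split_def)
    finally show ?thesis .
  qed
  then show ?thesis
    unfolding Delta3_ll_def Delta3_lr_def by (intro teq2_sw_concat_cong)
qed

lemma V3_prod_coaction:
  assumes t: "\<theta> \<in> V" and t': "\<theta>' \<in> V"
  shows "teq2 sC sA [(c1, V3_prod \<theta> \<theta>' c2 d). (c1, c2) \<leftarrow> DC c]
    [(act d2 h, a). (d1, d2) \<leftarrow> DC d, (h, a) \<leftarrow> rho (V3_prod \<theta> \<theta>' c d1)]"
proof -
  note lhs = lin_to_tensor_V3_prod_lhs_summand[OF t t', of d]
  note rhs = lin_to_tensor_V3_prod_rhs_summand[OF t t', of d]
  have "teq2 sC sA [(c1, V3_prod \<theta> \<theta>' c2 d). (c1, c2) \<leftarrow> DC c] (Delta3_rl (V3_prod_lhs_summand \<theta> \<theta>' d) c)"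
    by (rule V3_prod_coaction_lhs)
  also have "teq2 sC sA \<dots> (Delta3_ll (V3_prod_lhs_summand \<theta> \<theta>' d) c)"
    using teq2_trans[OF Delta3_ll_lr[OF lhs] Delta3_lr_rl[OF lhs]] by (rule teq2_sym)
  also have "teq2 sC sA \<dots> (Delta3_lr (V3_prod_rhs_summand \<theta> \<theta>' d) c)"
    by (rule teq2_sym[OF Delta3_lr_rhs_summand[OF t']])
  also have "teq2 sC sA \<dots> (Delta3_ll (V3_prod_rhs_summand \<theta> \<theta>' d) c)"
    by (rule teq2_sym[OF Delta3_ll_lr[OF rhs]])
  also have "teq2 sC sA \<dots> (Delta3_bal (V3_prod_rhs_summand \<theta> \<theta>' d) c)"
    by (rule Delta3_ll_bal[OF rhs])
  also have "teq2 sC sA \<dots> [(act d2 h, a). (d1, d2) \<leftarrow> DC d, (h, a) \<leftarrow> rho (V3_prod \<theta> \<theta>' c d1)]"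
    by (rule teq2_sym[OF V3_prod_coaction_rhs[OF t]])
  finally show ?thesis .
qed

lemma V3_prod_in_V3:
  assumes t: "\<theta> \<in> V" and t': "\<theta>' \<in> V"
  shows "V3_prod \<theta> \<theta>' \<in> V"
  using k_bilinear_V3_prod[OF t t'] V3_prod_mult_right[OF t t'] V3_prod_coaction[OF t t']
  by (simp add: V3_def sum_list_concat o_def split_def)

end

theorem lemma2p1p6:
  fixes sH :: "'k::comm_ring_1 \<Rightarrow> 'h::ring_1 \<Rightarrow> 'h"
    and DH :: "'h \<Rightarrow> ('h \<times> 'h) list" and eH :: "'h \<Rightarrow> 'k"
    and sA :: "'k \<Rightarrow> 'a::ring_1 \<Rightarrow> 'a" and rho :: "'a \<Rightarrow> ('h \<times> 'a) list"
    and sC :: "'k \<Rightarrow> 'c::ab_group_add \<Rightarrow> 'c" and DC :: "'c \<Rightarrow> ('c \<times> 'c) list"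
    and eC :: "'c \<Rightarrow> 'k" and act :: "'c \<Rightarrow> 'h \<Rightarrow> 'c"
  assumes "doi_hopf_datum sH DH eH sA rho sC DC eC act"
  shows "(\<forall>\<theta> \<in> V3 sH sA rho sC DC act. \<forall>\<theta>' \<in> V3 sH sA rho sC DC act.
            kop_prod DC act rho \<theta> \<theta>' \<in> V3 sH sA rho sC DC act \<and>
            (\<forall>c d. kop_prod DC act rho \<theta> \<theta>' c d =
               sum_list [\<theta> c3 d * \<theta>' c1 c2. (x, c3) \<leftarrow> DC c, (c1, c2) \<leftarrow> DC x]))
       \<and> (\<forall>\<theta> \<in> V3 sH sA rho sC DC act. normalized sA DC eC \<theta> \<longrightarrow>
            (\<forall>\<theta>' \<in> V3 sH sA rho sC DC act. kop_prod DC act rho \<theta>' \<theta> = \<theta>') \<and>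
            kop_prod DC act rho \<theta> \<theta> = \<theta>)"
proof -
  interpret doi_hopf sH DH eH sA rho sC DC eC act
    using assms by (rule doi_hopf.intro)
  show ?thesis
    using V3_prod_in_V3 kop_prod_eq_V3_prod V3_prod_eq kop_prod_normalized_right_unit by auto
qed

end
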